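(* Let $\mathcal{H}_A$, $\mathcal{H}_B$, $\mathcal{H}_{B'}$ be finite-dimensional Hilbert spaces, let $\rho_{AB}$ be a quantum state on $\mathcal{H}_A\otimes\mathcal{H}_B$, let $\epsilon\ge 0$, and let $\mathcal{F}$ be a trace-preserving completely positive map from system $B$ to system $B'$. Then $$\bar{R}_\epsilon(A|B)_{\rho}\le \bar{R}_\epsilon(A|B')_{\mathcal{F}(\rho)},$$ where $\mathcal{F}(\rho)$ denotes the state $(\mathrm{id}_A\otimes\mathcal{F})(\rho_{AB})$ on $\mathcal{H}_A\otimes\mathcal{H}_{B'}$.
   Context: All Hilbert spaces are finite-dimensional. For a Hermitian operator $X=\sum_i\lambda_iE_i$ (spectral decomposition), $\{X\le 0\}=\sum_{i:\lambda_i\le 0}E_i$ denotes the projection onto the nonpositive eigenspace; $\{X\ge0\}$ etc. are defined analogously. Logarithms are base 2. For a state $\rho_{AB}$ on $\mathcal{H}_A\otimes\mathcal{H}_B$ with marginal $\rho_B=\mathrm{Tr}_A\rho_{AB}$, set $\rho^{(2)}_B=\mathrm{Tr}_A[\rho_{AB}^2]$. For $\epsilon\ge0$, the information spectrum collision entropy is $$R_\epsilon(A|B)_\rho=\sup\big\{\lambda : \mathrm{Tr}\big[\{\rho^{(2)}_B-2^{-\lambda}\rho_B^2\le 0\}\rho_B\big]\ge 1-\epsilon\big\},$$ and the version with optimal side information is $$\bar{R}_\epsilon(A|B)_\rho=\sup_{\mathcal{H}_C,\ \rho_{ABC}:\ \mathrm{Tr}_C[\rho_{ABC}]=\rho_{AB}}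 R_\epsilon(A|BC)_\rho,$$ the supremum over all Hilbert spaces $\mathcal{H}_C$ and states $\rho_{ABC}$ on $\mathcal{H}_A\otimes\mathcal{H}_B\otimes\mathcal{H}_C$ extending $\rho_{AB}$, where $R_\epsilon(A|BC)_\rho$ is $R_\epsilon$ with $B$ replaced by the composite system $BC$ (so $\rho^{(2)}_{BC}=\mathrm{Tr}_A[\rho_{ABC}^2]$). *)

theory Defs
  imports Complex_Main "HOL-Library.Extended_Real" "Jordan_Normal_Form.Char_Poly"
begin

text \<open>Operators on a d-dimensional Hilbert space are complex d x d matrices.
  The composite space of systems of dimensions d1, d2 is indexed by i*d2 + j.\<close>

definition adj :: "complex mat \<Rightarrow> complex mat" where
  "adj M = mat (dim_col M) (dim_row M) (\<lambda>(i,j). cnj (M $$ (j,i)))"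

definition hermitian :: "complex mat \<Rightarrow> bool" where
  "hermitian M \<longleftrightarrow> dim_row M = dim_col M \<and> adj M = M"

definition tr :: "complex mat \<Rightarrow> complex" where
  "tr M = (\<Sum>i<dim_row M. M $$ (i,i))"

definition psd :: "nat \<Rightarrow> complex mat \<Rightarrow> bool" where
  "psd n M \<longleftrightarrow> M \<in> carrier_mat n n \<and> hermitian M \<and>
     (\<forall>v \<in> carrier_vec n. 0 \<le> Re (conjugate v \<bullet> (M *\<^sub>v v)))"

definition density :: "nat \<Rightarrow> complex mat \<Rightarrow> bool" where
  "density n \<rho> \<longleftrightarrow> psd n \<rho> \<and> tr \<rho> = 1"

definition eigspace :: "complex mat \<Rightarrow> real \<Rightarrow> complex vec set" where
  "eigspace M l = {v \<in> carrier_vec (dim_row M). M *\<^sub>v v = complex_of_real l \<cdot>\<^sub>v v}"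

definition orth_proj :: "nat \<Rightarrow> complex vec set \<Rightarrow> complex mat" where
  "orth_proj n S = (THE P. P \<in> carrier_mat n n \<and> P * P = P \<and> adj P = P \<and>
                          (\<lambda>v. P *\<^sub>v v) ` carrier_vec n = S)"

text \<open>{X <= 0}: sum of the spectral projections E_lambda over the eigenvalues lambda <= 0
  (for Hermitian X all eigenvalues are real).\<close>
definition nonpos_proj :: "complex mat \<Rightarrow> complex mat" where
  "nonpos_proj X =
     foldr (\<lambda>l acc. orth_proj (dim_row X) (eigspace X l) + acc)
       (sorted_list_of_set {l::real. eigenvalue X (complex_of_real l) \<and> l \<le> 0})
       (0\<^sub>m (dim_row X) (dim_row X))"

definition ptrace_first :: "nat \<Rightarrow> nat \<Rightarrow> complex mat \<Rightarrow> complex mat" where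
  "ptrace_first dA dB M = mat dB dB (\<lambda>(j,j'). \<Sum>i<dA. M $$ (i*dB + j, i*dB + j'))"

definition ptrace_last :: "nat \<Rightarrow> nat \<Rightarrow> complex mat \<Rightarrow> complex mat" where
  "ptrace_last dX dC M = mat dX dX (\<lambda>(k,k'). \<Sum>c<dC. M $$ (k*dC + c, k'*dC + c))"

definition R_eps :: "nat \<Rightarrow> nat \<Rightarrow> real \<Rightarrow> complex mat \<Rightarrow> ereal" where
  "R_eps dA dB \<epsilon> \<rho> =
    (let \<rho>B = ptrace_first dA dB \<rho>; \<rho>2 = ptrace_first dA dB (\<rho> * \<rho>) in
     Sup {ereal l | l. 1 - \<epsilon> \<le>
        Re (tr (nonpos_proj (\<rho>2 - complex_of_real (2 powr (- l)) \<cdot>\<^sub>m (\<rho>B * \<rho>B)) * \<rho>B))})"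

definition R_bar :: "nat \<Rightarrow> nat \<Rightarrow> real \<Rightarrow> complex mat \<Rightarrow> ereal" where
  "R_bar dA dB \<epsilon> \<rho> =
     Sup {R_eps dA (dB * dC) \<epsilon> \<sigma> | dC \<sigma>.
            density (dA * dB * dC) \<sigma> \<and> ptrace_last (dA * dB) dC \<sigma> = \<rho>}"

text \<open>(id_n (x) F)(M), where M acts on C^n (x) C^dB and F maps dB x dB to dB' x dB' matrices
  (defined blockwise, i.e. by linear extension).\<close>
definition id_tensor :: "nat \<Rightarrow> nat \<Rightarrow> nat \<Rightarrow> (complex mat \<Rightarrow> complex mat) \<Rightarrow> complex mat \<Rightarrow> complex mat" where
  "id_tensor n dB dB' F M = mat (n * dB') (n * dB') (\<lambda>(i,j).
      F (mat dB dB (\<lambda>(k,l). M $$ ((i div dB') * dB + k, (j div dB') * dB + l))) $$ (i mod dB', j mod dB'))"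

definition cptp :: "nat \<Rightarrow> nat \<Rightarrow> (complex mat \<Rightarrow> complex mat) \<Rightarrow> bool" where
  "cptp dB dB' F \<longleftrightarrow>
     (\<forall>X \<in> carrier_mat dB dB. F X \<in> carrier_mat dB' dB') \<and>
     (\<forall>X \<in> carrier_mat dB dB. \<forall>Y \<in> carrier_mat dB dB. F (X + Y) = F X + F Y) \<and>
     (\<forall>X \<in> carrier_mat dB dB. \<forall>c. F (c \<cdot>\<^sub>m X) = c \<cdot>\<^sub>m F X) \<and>
     (\<forall>X \<in> carrier_mat dB dB. tr (F X) = tr X) \<and>
     (\<forall>n M. psd (n * dB) M \<longrightarrow> psd (n * dB') (id_tensor n dB dB' F M))"

end

theory Submission
  imports Defs
begin

text \<open>By the Stinespring theorem, F(X) = Tr_E (V X adj V) for an isometry V from B to B' (x) E;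
  here V is read off from a factorization M * adj M of the (positive semidefinite) Choi matrix of F.
  If rho_ABC extends rho_AB, then conjugating it by 1_A (x) V (x) 1_C gives an extension of
  F(rho) to the system E (x) C.  Conjugation of the conditioning system by an isometry does not
  change R_eps: the spectral projections of the conjugated operator are the conjugated spectral
  projections, except that at eigenvalue 0 the orthocomplement of the range is added, and that
  part is invisible to the conjugated marginal.  Hence every value in the supremum defining the
  left-hand side also occurs in the one defining the right-hand side.\<close>

lemma sum_lessThan_add:
  fixes n b :: nat
  shows "(\<Sum>r<n+b. f r) = (\<Sum>r<n. f r) + (\<Sum>j<b. f (n+j)::'a::comm_monoid_add)"
  by (induct b) (simp_all add: add.assoc)

lemma sum_lessThan_mult:
  fixes a b :: nat
  shows "(\<Sum>r<a*b. f r) = (\<Sum>i<a. \<Sum>j<b. f (i*b+j)::'a::comm_monoid_add)"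
proof (induct a)
  case (Suc a)
  have "(\<Sum>r<Suc a*b. f r) = (\<Sum>r<a*b + b. f r)" by (simp add: add.commute)
  also have "\<dots> = (\<Sum>r<a*b. f r) + (\<Sum>j<b. f (a*b+j))" by (rule sum_lessThan_add)
  finally show ?case using Suc by (simp add: add.commute)
qed simp

lemma mult_add_less_mult: "(i::nat) < k \<Longrightarrow> j < m \<Longrightarrow> i * m + j < k * m"
proof -
  assume "i < k" "j < m"
  then have "i * m + j < Suc i * m" by simp
  also have "\<dots> \<le> k * m" using \<open>i < k\<close> by (intro mult_le_mono1) simp
  finally show ?thesis .
qed

lemma sum_if_const: "(\<Sum>p\<in>A. if c then G p else 0) = (if c then sum G A else (0::'a::comm_monoid_add))"
  by (cases c) simp_all

lemma index_mult_mat_sum: "A \<in> carrier_mat n k \<Longrightarrow> B \<in> carrier_mat k m \<Longrightarrow> i < n \<Longrightarrow> j < m \<Longrightarrow>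
  (A * B) $$ (i,j) = (\<Sum>l<k. A $$ (i,l) * B $$ (l,j))"
  by (auto simp: scalar_prod_def lessThan_atLeast0 intro!: sum.cong)

lemma index_mult_mat_vec_sum: "A \<in> carrier_mat n k \<Longrightarrow> v \<in> carrier_vec k \<Longrightarrow> i < n \<Longrightarrow>
  (A *\<^sub>v v) $ i = (\<Sum>l<k. A $$ (i,l) * v $ l)"
  by (auto simp: scalar_prod_def lessThan_atLeast0 intro!: sum.cong)

lemma row_col_sum: "A \<in> carrier_mat n k \<Longrightarrow> B \<in> carrier_mat k m \<Longrightarrow> i < n \<Longrightarrow> j < m \<Longrightarrow>
  row A i \<bullet> col B j = (\<Sum>l<k. A $$ (i,l) * B $$ (l,j))"
  by (auto simp: scalar_prod_def lessThan_atLeast0 intro!: sum.cong)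

lemma row_vec_sum: "A \<in> carrier_mat n k \<Longrightarrow> v \<in> carrier_vec k \<Longrightarrow> i < n \<Longrightarrow>
  row A i \<bullet> v = (\<Sum>l<k. A $$ (i,l) * v $ l)"
  by (auto simp: scalar_prod_def lessThan_atLeast0 intro!: sum.cong)

lemma cscalar_prod_sum: "v \<in> carrier_vec n \<Longrightarrow> w \<in> carrier_vec n \<Longrightarrow>
  conjugate v \<bullet> w = (\<Sum>i<n. cnj (v $ i) * w $ i)"
  by (auto simp: scalar_prod_def lessThan_atLeast0 intro!: sum.cong)

lemma eq_mat_via_mult_vec:
  fixes A B :: "complex mat"
  assumes "A \<in> carrier_mat n m" "B \<in> carrier_mat n m"
    and "\<And>v. v \<in> carrier_vec m \<Longrightarrow> A *\<^sub>v v = B *\<^sub>v v"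
  shows "A = B"
proof (rule eq_matI)
  fix i j assume ij: "i < dim_row B" "j < dim_col B"
  have e: "\<And>C :: complex mat. C \<in> carrier_mat n m \<Longrightarrow> i < n \<Longrightarrow> j < m \<Longrightarrow>
      (C *\<^sub>v unit_vec m j) $ i = C $$ (i,j)"
    by (simp add: row_vec_sum[of _ n m] if_distrib cong: if_cong)
  show "A $$ (i,j) = B $$ (i,j)"
    using e[OF assms(1)] e[OF assms(2)] assms(3)[of "unit_vec m j"] ij assms(2) by auto
qed (use assms in auto)

lemma zero_mat_mult_vec[simp]: "v \<in> carrier_vec m \<Longrightarrow> 0\<^sub>m n m *\<^sub>v v = 0\<^sub>v n"
  by (rule eq_vecI) (auto simp: row_vec_sum[of _ n m])

lemma mult_mat_zero_vec[simp]: "A \<in> carrier_mat k n \<Longrightarrow> A *\<^sub>v 0\<^sub>v n = (0\<^sub>v k :: complex vec)"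
  by (rule eq_vecI) (auto simp: row_vec_sum[of _ k n])

lemma smult_zero_vec_right[simp]: "(k::complex) \<cdot>\<^sub>v 0\<^sub>v n = 0\<^sub>v n"
  by (rule eq_vecI) auto

lemma zero_smult_vec[simp]: "w \<in> carrier_vec n \<Longrightarrow> (0::complex) \<cdot>\<^sub>v w = 0\<^sub>v n"
  by (rule eq_vecI) auto

lemma smult_mat_mult_vec_assoc:
  "M \<in> carrier_mat a b \<Longrightarrow> v \<in> carrier_vec b \<Longrightarrow> (c \<cdot>\<^sub>m M) *\<^sub>v v = (c::complex) \<cdot>\<^sub>v (M *\<^sub>v v)"
  by (rule eq_vecI) (auto simp: row_vec_sum[of _ a b] sum_distrib_left mult.assoc)

lemma minus_smult_carrier_mat[simp]:
  "A \<in> carrier_mat a b \<Longrightarrow> B \<in> carrier_mat a b \<Longrightarrow> A - c \<cdot>\<^sub>m B \<in> carrier_mat a b"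
  unfolding carrier_mat_def by simp

lemma vec_minus_eq_zero_iff:
  assumes "a \<in> carrier_vec n" "b \<in> carrier_vec n"
  shows "(a - b = 0\<^sub>v n) = (a = (b :: complex vec))"
proof
  assume h: "a - b = 0\<^sub>v n"
  show "a = b"
  proof (rule eq_vecI)
    fix i assume "i < dim_vec b"
    then have i: "i < n" using assms by simp
    have "(a - b) $ i = 0" using h i by simp
    then show "a $ i = b $ i" using i assms by simp
  qed (use assms in simp)
qed (use assms in simp)

lemma vec_add_minus_cancel_left: "a \<in> carrier_vec m \<Longrightarrow> b \<in> carrier_vec m \<Longrightarrow> a + b - a = (b :: complex vec)"
  by (intro eq_vecI) auto

lemma vec_add_minus_cancel_right: "a \<in> carrier_vec m \<Longrightarrow> b \<in> carrier_vec m \<Longrightarrow> a + (b - a) = (b :: complex vec)"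
  by (intro eq_vecI) auto

lemma cscalar_self_eq_zero:
  fixes v :: "complex vec"
  assumes "v \<in> carrier_vec n" "conjugate v \<bullet> v = 0"
  shows "v = 0\<^sub>v n"
proof -
  have "v \<bullet>c v = 0" using assms conjugate_vec_sprod_comm[of v n v] by simp
  then show ?thesis using conjugate_square_eq_0_vec[OF assms(1)] by simp
qed

lemma adj_carrier[simp]: "M \<in> carrier_mat n m \<Longrightarrow> adj M \<in> carrier_mat m n"
  by (auto simp: adj_def)

lemma adj_dims[simp]: "dim_row (adj M) = dim_col M" "dim_col (adj M) = dim_row M"
  by (auto simp: adj_def)

lemma adj_index[simp]: "i < dim_col M \<Longrightarrow> j < dim_row M \<Longrightarrow> adj M $$ (i,j) = cnj (M $$ (j,i))"
  by (auto simp: adj_def)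

lemma adj_mult_vec_carrier[simp]: "A \<in> carrier_mat n m \<Longrightarrow> v \<in> carrier_vec n \<Longrightarrow> adj A *\<^sub>v v \<in> carrier_vec m"
  by (rule mult_mat_vec_carrier[OF adj_carrier])

lemma adj_adj[simp]: "adj (adj M) = M"
  by (auto simp: adj_def)

lemma adj_one[simp]: "adj (1\<^sub>m n) = 1\<^sub>m n"
  by (auto intro!: eq_matI)

lemma adj_mult:
  assumes "A \<in> carrier_mat n k" "B \<in> carrier_mat k m"
  shows "adj (A * B) = adj B * adj A"
proof (rule eq_matI)
  fix i j assume "i < dim_row (adj B * adj A)" "j < dim_col (adj B * adj A)"
  then have ij: "i < m" "j < n" using assms by auto
  have "adj (A * B) $$ (i,j) = cnj (\<Sum>l<k. A $$ (j,l) * B $$ (l,i))"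
    using assms ij by (simp add: row_col_sum)
  also have "\<dots> = (\<Sum>l<k. adj B $$ (i,l) * adj A $$ (l,j))"
    using assms ij by (auto simp: cnj_sum mult.commute intro!: sum.cong)
  also have "\<dots> = (adj B * adj A) $$ (i,j)"
    using assms ij by (simp add: row_col_sum[of _ m k _ n])
  finally show "adj (A * B) $$ (i,j) = (adj B * adj A) $$ (i,j)" .
qed (use assms in auto)

lemma adj_add: "A \<in> carrier_mat n m \<Longrightarrow> B \<in> carrier_mat n m \<Longrightarrow> adj (A + B) = adj A + adj B"
  by (auto intro!: eq_matI)

lemma adj_minus: "A \<in> carrier_mat n m \<Longrightarrow> B \<in> carrier_mat n m \<Longrightarrow> adj (A - B) = adj A - adj B"
  by (auto intro!: eq_matI)

lemma tr_mult_comm: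
  assumes "A \<in> carrier_mat n m" "B \<in> carrier_mat m n"
  shows "tr (A * B) = tr (B * A)"
proof -
  have "tr (A * B) = (\<Sum>i<n. \<Sum>l<m. A $$ (i,l) * B $$ (l,i))"
    using assms by (auto simp: tr_def row_col_sum intro!: sum.cong)
  also have "\<dots> = (\<Sum>l<m. \<Sum>i<n. B $$ (l,i) * A $$ (i,l))"
    by (subst sum.swap) (simp add: mult.commute)
  also have "\<dots> = tr (B * A)"
    using assms by (auto simp: tr_def row_col_sum intro!: sum.cong)
  finally show ?thesis .
qed

lemma tr_add: "A \<in> carrier_mat n n \<Longrightarrow> B \<in> carrier_mat n n \<Longrightarrow> tr (A + B) = tr A + tr B"
  by (auto simp: tr_def sum.distrib)

lemma tr_minus: "A \<in> carrier_mat n n \<Longrightarrow> B \<in> carrier_mat n n \<Longrightarrow> tr (A - B) = tr A - tr B"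
  by (auto simp: tr_def sum_subtractf)

lemma tr_zero[simp]: "tr (0\<^sub>m n n) = 0"
  by (auto simp: tr_def)

lemma cscalar_mult_adj:
  assumes A: "A \<in> carrier_mat n m" and v: "v \<in> carrier_vec n" and w: "w \<in> carrier_vec m"
  shows "conjugate v \<bullet> (A *\<^sub>v w) = conjugate (adj A *\<^sub>v v) \<bullet> w"
proof -
  have "conjugate v \<bullet> (A *\<^sub>v w) = (\<Sum>i<n. \<Sum>l<m. cnj (v$i) * (A $$ (i,l) * w $ l))"
    using assms by (auto simp: cscalar_prod_sum[of _ n] row_vec_sum sum_distrib_left intro!: sum.cong)
  also have "\<dots> = (\<Sum>l<m. \<Sum>i<n. cnj (v$i) * (A $$ (i,l) * w $ l))"
    by (rule sum.swap)
  also have "\<dots> = (\<Sum>l<m. cnj ((adj A *\<^sub>v v) $ l) * w $ l)"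
    using assms by (auto simp: row_vec_sum[of _ m n] cnj_sum sum_distrib_left mult_ac intro!: sum.cong)
  also have "\<dots> = conjugate (adj A *\<^sub>v v) \<bullet> w"
    using assms by (subst cscalar_prod_sum[of _ m]) auto
  finally show ?thesis .
qed

lemma psd_carrier: "psd n J \<Longrightarrow> J \<in> carrier_mat n n"
  by (simp add: psd_def)

lemma psd_conj:
  assumes S: "psd n S" and U: "U \<in> carrier_mat m n"
  shows "psd m (U * S * adj U)"
proof -
  have SC: "S \<in> carrier_mat n n" and SA: "adj S = S" using S by (auto simp: psd_def hermitian_def)
  have US: "U * S \<in> carrier_mat m n" using SC U by auto
  have "adj (U * S * adj U) = U * (adj S * adj U)"
    using adj_mult[OF US adj_carrier[OF U]] adj_mult[OF U SC] by simp
  also have "\<dots> = U * S * adj U" using SC SA U by (simp add: assoc_mult_mat[of _ m n _ n _ m])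
  finally have H: "adj (U * S * adj U) = U * S * adj U" .
  have "0 \<le> Re (conjugate v \<bullet> ((U * S * adj U) *\<^sub>v v))" if v: "v \<in> carrier_vec m" for v
  proof -
    let ?w = "adj U *\<^sub>v v"
    have w: "?w \<in> carrier_vec n" using U v by simp
    have "conjugate v \<bullet> ((U * S * adj U) *\<^sub>v v) = conjugate v \<bullet> (U *\<^sub>v (S *\<^sub>v ?w))"
      using SC U v assoc_mult_mat_vec[OF US adj_carrier[OF U]] assoc_mult_mat_vec[OF U SC w] by simp
    also have "\<dots> = conjugate ?w \<bullet> (S *\<^sub>v ?w)"
      using SC U v w by (subst cscalar_mult_adj[of _ m n]) auto
    finally show ?thesis using S w by (auto simp: psd_def)
  qed
  then show ?thesis using SC U H by (auto simp: psd_def hermitian_def)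
qed

lemma psd_one: "psd n (1\<^sub>m n)"
proof -
  have "0 \<le> Re (conjugate v \<bullet> (1\<^sub>m n *\<^sub>v v))" if v: "v \<in> carrier_vec n" for v :: "complex vec"
  proof -
    have "Re (conjugate v \<bullet> (1\<^sub>m n *\<^sub>v v)) = (\<Sum>i<n. (Re (v$i))\<^sup>2 + (Im (v$i))\<^sup>2)"
      using v by (simp add: cscalar_prod_sum power2_eq_square)
    then show ?thesis by (simp add: sum_nonneg)
  qed
  then show ?thesis by (auto simp: psd_def hermitian_def)
qed

lemma psd_mult_adj: "M \<in> carrier_mat n k \<Longrightarrow> psd n (M * adj M)"
  using psd_conj[OF psd_one, of M n k] by simp

lemma psd_hermitian_index: "psd N J \<Longrightarrow> i < N \<Longrightarrow> j < N \<Longrightarrow> cnj (J $$ (j,i)) = J $$ (i,j)"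
  by (metis adj_index carrier_matD hermitian_def psd_def)

section \<open>Orthogonal projections\<close>

definition is_proj :: "nat \<Rightarrow> complex mat \<Rightarrow> bool" where
  "is_proj n P \<longleftrightarrow> P \<in> carrier_mat n n \<and> P * P = P \<and> adj P = P"

abbreviation mat_range :: "nat \<Rightarrow> complex mat \<Rightarrow> complex vec set" where
  "mat_range n P \<equiv> (\<lambda>v. P *\<^sub>v v) ` carrier_vec n"

lemma proj_carrier: "is_proj n P \<Longrightarrow> P \<in> carrier_mat n n"
  by (simp add: is_proj_def)

lemma proj_mult_vec_idem: "is_proj n P \<Longrightarrow> v \<in> carrier_vec n \<Longrightarrow> P *\<^sub>v (P *\<^sub>v v) = P *\<^sub>v v"
  by (metis assoc_mult_mat_vec is_proj_def)

lemma proj_fixes_range: "is_proj n P \<Longrightarrow> x \<in> mat_range n P \<Longrightarrow> P *\<^sub>v x = x"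
  using proj_mult_vec_idem by blast

lemma proj_range_carrier: "is_proj n P \<Longrightarrow> mat_range n P \<subseteq> carrier_vec n"
  by (auto simp: is_proj_def)

lemma proj_cscalar_swap:
  "is_proj n P \<Longrightarrow> x \<in> carrier_vec n \<Longrightarrow> y \<in> carrier_vec n \<Longrightarrow>
    conjugate x \<bullet> (P *\<^sub>v y) = conjugate (P *\<^sub>v x) \<bullet> y"
  using cscalar_mult_adj[of P n n x y] by (auto simp: is_proj_def)

lemma proj_range_add:
  assumes P: "is_proj n P" and "x \<in> mat_range n P" "y \<in> mat_range n P"
  shows "x + y \<in> mat_range n P"
proof -
  obtain a b where ab: "a \<in> carrier_vec n" "b \<in> carrier_vec n" "x = P *\<^sub>v a" "y = P *\<^sub>v b"
    using assms by auto
  then have "x + y = P *\<^sub>v (a + b)"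
    using mult_add_distrib_mat_vec[OF proj_carrier[OF P]] by simp
  then show ?thesis using ab by auto
qed

lemma proj_range_smult:
  assumes P: "is_proj n P" and "x \<in> mat_range n P"
  shows "k \<cdot>\<^sub>v x \<in> mat_range n P"
proof -
  obtain a where a: "a \<in> carrier_vec n" "x = P *\<^sub>v a" using assms by auto
  then have "k \<cdot>\<^sub>v x = P *\<^sub>v (k \<cdot>\<^sub>v a)"
    using mult_mat_vec[OF proj_carrier[OF P]] by simp
  then show ?thesis using a by auto
qed

lemma proj_eqI:
  assumes P: "is_proj n P" and Q: "is_proj n Q" and r: "mat_range n P = mat_range n Q"
  shows "P = Q"
proof -
  have PC: "P \<in> carrier_mat n n" and QC: "Q \<in> carrier_mat n n" using P Q by (auto simp: is_proj_def)
  have absorb: "A * B = B" if A: "is_proj n A" and B: "is_proj n B"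
    and AB: "mat_range n B \<subseteq> mat_range n A" for A B
  proof (rule eq_mat_via_mult_vec[of _ n n])
    fix v :: "complex vec" assume v: "v \<in> carrier_vec n"
    have "A *\<^sub>v (B *\<^sub>v v) = B *\<^sub>v v" using AB v proj_fixes_range[OF A] by blast
    then show "(A * B) *\<^sub>v v = B *\<^sub>v v"
      using assoc_mult_mat_vec[OF proj_carrier[OF A] proj_carrier[OF B] v] by simp
  qed (use proj_carrier[OF A] proj_carrier[OF B] in simp_all)
  have "P = adj (Q * P)" using absorb[OF Q P] r P by (simp add: is_proj_def)
  also have "\<dots> = P * Q" using adj_mult[OF QC PC] P Q by (simp add: is_proj_def)
  also have "\<dots> = Q" using absorb[OF P Q] r by simp
  finally show ?thesis .
qed

lemma orth_proj_eqI: "is_proj n P \<Longrightarrow> mat_range n P = S \<Longrightarrow> orth_proj n S = P"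
  unfolding orth_proj_def by (rule the_equality) (auto simp: is_proj_def intro: proj_eqI)

lemma zero_proj: "is_proj n (0\<^sub>m n n)" "mat_range n (0\<^sub>m n n) = {0\<^sub>v n}"
  by (auto simp: is_proj_def intro: image_eqI[OF _ zero_carrier_vec])

lemma rank_one_mult_vec:
  assumes w: "w \<in> carrier_vec n" and v: "v \<in> carrier_vec n"
  shows "mat n n (\<lambda>(i,j). w $ i * cnj (w $ j) / c) *\<^sub>v v = ((conjugate w \<bullet> v) / c) \<cdot>\<^sub>v w"
proof (rule eq_vecI)
  let ?R = "mat n n (\<lambda>(i,j). w $ i * cnj (w $ j) / c)"
  fix i assume "i < dim_vec (((conjugate w \<bullet> v) / c) \<cdot>\<^sub>v w)"
  then have i: "i < n" using w by simp
  have RC: "?R \<in> carrier_mat n n" by simp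
  have "(?R *\<^sub>v v) $ i = (\<Sum>l<n. ?R $$ (i,l) * v $ l)"
    by (rule index_mult_mat_vec_sum[OF RC v i])
  also have "\<dots> = w $ i * (\<Sum>l<n. cnj (w $ l) * v $ l) / c"
    using i by (simp add: sum_distrib_left sum_divide_distrib mult_ac)
  finally show "(?R *\<^sub>v v) $ i = (((conjugate w \<bullet> v) / c) \<cdot>\<^sub>v w) $ i"
    using i v w by (simp add: cscalar_prod_sum[of _ n])
qed (use w in simp)

lemma adj_rank_one:
  "cnj c = c \<Longrightarrow> adj (mat n n (\<lambda>(i,j). w $ i * cnj (w $ j) / c)) = mat n n (\<lambda>(i,j). w $ i * cnj (w $ j) / c)"
  by (auto intro!: eq_matI simp: mult.commute)

lemma proj_add_rank_one:
  assumes Q: "is_proj n Q" and w: "w \<in> carrier_vec n" "w \<noteq> 0\<^sub>v n" and Qw: "Q *\<^sub>v w = 0\<^sub>v n"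
  defines "P \<equiv> Q + mat n n (\<lambda>(i,j). w $ i * cnj (w $ j) / (conjugate w \<bullet> w))"
  shows "is_proj n P" "mat_range n P = {x + t \<cdot>\<^sub>v w | x t. x \<in> mat_range n Q}"
proof -
  define c where "c = conjugate w \<bullet> w"
  have c0: "c \<noteq> 0" using cscalar_self_eq_zero[OF w(1)] w(2) by (auto simp: c_def)
  have cc: "cnj c = c" unfolding c_def using w by (simp add: cscalar_prod_sum[of _ n] cnj_sum mult.commute)
  have QC: "Q \<in> carrier_mat n n" using Q by (simp add: is_proj_def)
  have PC: "P \<in> carrier_mat n n" using QC by (simp add: P_def)
  have wQ: "conjugate w \<bullet> (Q *\<^sub>v v) = 0" if "v \<in> carrier_vec n" for v
    using proj_cscalar_swap[OF Q w(1) that] Qw that by simp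
  have Pv: "P *\<^sub>v v = Q *\<^sub>v v + ((conjugate w \<bullet> v) / c) \<cdot>\<^sub>v w" if v: "v \<in> carrier_vec n" for v
    using add_mult_distrib_mat_vec[OF QC _ v] rank_one_mult_vec[OF w(1) v] by (simp add: P_def c_def)
  have Pfix: "P *\<^sub>v (x + t \<cdot>\<^sub>v w) = x + t \<cdot>\<^sub>v w" if x: "x \<in> mat_range n Q" for x t
  proof -
    have xc: "x \<in> carrier_vec n" using x QC by auto
    have Qx: "Q *\<^sub>v x = x" using proj_fixes_range[OF Q x] .
    have "Q *\<^sub>v (x + t \<cdot>\<^sub>v w) = x"
      using mult_add_distrib_mat_vec[OF QC xc smult_carrier_vec[THEN iffD2, OF w(1)]] Qx Qw xc
      by (simp add: mult_mat_vec[OF QC w(1)])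
    moreover have "conjugate w \<bullet> (x + t \<cdot>\<^sub>v w) = t * c"
      using scalar_prod_add_distrib[of "conjugate w" n x "t \<cdot>\<^sub>v w"] xc w wQ[OF xc] Qx
      by (simp add: c_def)
    ultimately show ?thesis using Pv[of "x + t \<cdot>\<^sub>v w"] xc w c0 by simp
  qed
  show range: "mat_range n P = {x + t \<cdot>\<^sub>v w | x t. x \<in> mat_range n Q}"
  proof
    show "mat_range n P \<subseteq> {x + t \<cdot>\<^sub>v w | x t. x \<in> mat_range n Q}"
      using Pv by blast
    show "{x + t \<cdot>\<^sub>v w | x t. x \<in> mat_range n Q} \<subseteq> mat_range n P"
    proof
      fix y assume "y \<in> {x + t \<cdot>\<^sub>v w | x t. x \<in> mat_range n Q}"
      then obtain x t where y: "y = x + t \<cdot>\<^sub>v w" and x: "x \<in> mat_range n Q" by blast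
      have "y \<in> carrier_vec n" using x QC w y by auto
      then show "y \<in> mat_range n P" using Pfix[OF x, of t] y by (metis image_eqI)
    qed
  qed
  have PP: "P * P = P"
  proof (rule eq_mat_via_mult_vec[of _ n n])
    fix v :: "complex vec" assume v: "v \<in> carrier_vec n"
    have "P *\<^sub>v v \<in> mat_range n P" using v by blast
    then obtain x t where "P *\<^sub>v v = x + t \<cdot>\<^sub>v w" "x \<in> mat_range n Q" unfolding range
      by blast
    then have "P *\<^sub>v (P *\<^sub>v v) = P *\<^sub>v v" using Pfix by simp
    then show "(P * P) *\<^sub>v v = P *\<^sub>v v" using assoc_mult_mat_vec[OF PC PC v] by simp
  qed (use PC in simp_all)
  have "adj P = P"
    using adj_add[OF QC, of "mat n n (\<lambda>(i,j). w $ i * cnj (w $ j) / c)"] adj_rank_one[OF cc] Q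
    by (simp add: P_def c_def is_proj_def)
  with PC PP show "is_proj n P" by (simp add: is_proj_def)
qed

lemma span_range_shift:
  assumes Q: "is_proj n Q" and a: "a \<in> carrier_vec n" and b: "b \<in> mat_range n Q"
  shows "{x + t \<cdot>\<^sub>v (a + b) | x t. x \<in> mat_range n Q} = {x + t \<cdot>\<^sub>v a | x t. x \<in> mat_range n Q}"
proof -
  have carrier: "x \<in> carrier_vec n" if "x \<in> mat_range n Q" for x
    using proj_range_carrier[OF Q] that by blast
  have closed: "x + s \<cdot>\<^sub>v b \<in> mat_range n Q" if "x \<in> mat_range n Q" for x s
    using proj_range_add[OF Q that proj_range_smult[OF Q b]] .
  show ?thesis
  proof (intro equalityI subsetI)
    fix y assume "y \<in> {x + t \<cdot>\<^sub>v (a + b) | x t. x \<in> mat_range n Q}"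
    then obtain x t where y: "y = x + t \<cdot>\<^sub>v (a + b)" and x: "x \<in> mat_range n Q" by blast
    have "y = (x + t \<cdot>\<^sub>v b) + t \<cdot>\<^sub>v a"
      unfolding y using carrier[OF x] carrier[OF b] a by (intro eq_vecI) (simp_all add: algebra_simps)
    with closed[OF x] show "y \<in> {x + t \<cdot>\<^sub>v a | x t. x \<in> mat_range n Q}" by blast
  next
    fix y assume "y \<in> {x + t \<cdot>\<^sub>v a | x t. x \<in> mat_range n Q}"
    then obtain x t where y: "y = x + t \<cdot>\<^sub>v a" and x: "x \<in> mat_range n Q" by blast
    have "y = (x + (- t) \<cdot>\<^sub>v b) + t \<cdot>\<^sub>v (a + b)"
      unfolding y using carrier[OF x] carrier[OF b] a by (intro eq_vecI) (simp_all add: algebra_simps)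
    with closed[OF x] show "y \<in> {x + t \<cdot>\<^sub>v (a + b) | x t. x \<in> mat_range n Q}" by blast
  qed
qed

text \<open>Gram-Schmidt step: the component of a orthogonal to the range of Q is either zero or
  spans the missing direction.\<close>

lemma proj_extend:
  assumes Q: "is_proj n Q" and a: "a \<in> carrier_vec n"
  shows "\<exists>P. is_proj n P \<and> mat_range n P = {x + t \<cdot>\<^sub>v a | x t. x \<in> mat_range n Q}"
proof -
  have QC: "Q \<in> carrier_mat n n" using Q by (simp add: is_proj_def)
  define w where "w = a + (- 1) \<cdot>\<^sub>v (Q *\<^sub>v a)"
  have w: "w \<in> carrier_vec n" using a QC by (simp add: w_def)
  have b: "(- 1) \<cdot>\<^sub>v (Q *\<^sub>v a) \<in> mat_range n Q" using proj_range_smult[OF Q] a by blast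
  have span_eq: "{x + t \<cdot>\<^sub>v w | x t. x \<in> mat_range n Q} = {x + t \<cdot>\<^sub>v a | x t. x \<in> mat_range n Q}"
    unfolding w_def by (rule span_range_shift[OF Q a b])
  have "Q *\<^sub>v w = Q *\<^sub>v a + (- 1) \<cdot>\<^sub>v (Q *\<^sub>v (Q *\<^sub>v a))"
    using a QC by (simp add: w_def mult_add_distrib_mat_vec[OF QC] mult_mat_vec[OF QC])
  also have "\<dots> = 0\<^sub>v n"
    using proj_mult_vec_idem[OF Q a] a QC by (intro eq_vecI) simp_all
  finally have Qw: "Q *\<^sub>v w = 0\<^sub>v n" .
  show ?thesis
  proof (cases "w = 0\<^sub>v n")
    case True
    have zero_span: "{x + t \<cdot>\<^sub>v w | x t. x \<in> mat_range n Q} = mat_range n Q"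
    proof (intro equalityI subsetI)
      fix y assume "y \<in> {x + t \<cdot>\<^sub>v w | x t. x \<in> mat_range n Q}"
      then obtain x t where y: "y = x + t \<cdot>\<^sub>v w" and x: "x \<in> mat_range n Q" by blast
      have "x \<in> carrier_vec n" using subsetD[OF proj_range_carrier[OF Q] x] .
      then have "y = x" using y True by simp
      then show "y \<in> mat_range n Q" using x by simp
    next
      fix y assume y: "y \<in> mat_range n Q"
      have "y \<in> carrier_vec n" using subsetD[OF proj_range_carrier[OF Q] y] .
      then have "y = y + 0 \<cdot>\<^sub>v w" using True by simp
      then show "y \<in> {x + t \<cdot>\<^sub>v w | x t. x \<in> mat_range n Q}" using y by blast
    qed
    show ?thesis
    proof (intro exI conjI)
      show "is_proj n Q" by (rule Q)
      show "mat_range n Q = {x + t \<cdot>\<^sub>v a | x t. x \<in> mat_range n Q}"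
        using trans[OF sym[OF zero_span] span_eq] .
    qed
  next
    case False
    let ?P = "Q + mat n n (\<lambda>(i,j). w $ i * cnj (w $ j) / (conjugate w \<bullet> w))"
    show ?thesis
    proof (intro exI conjI)
      show "is_proj n ?P" by (rule proj_add_rank_one(1)[OF Q w False Qw])
      show "mat_range n ?P = {x + t \<cdot>\<^sub>v a | x t. x \<in> mat_range n Q}"
        using proj_add_rank_one(2)[OF Q w False Qw] span_eq by (rule trans)
    qed
  qed
qed

fun span_list :: "nat \<Rightarrow> complex vec list \<Rightarrow> complex vec set" where
  "span_list n [] = {0\<^sub>v n}"
| "span_list n (a # vs) = {x + t \<cdot>\<^sub>v a | x t. x \<in> span_list n vs}"

lemma span_list_carrier: "set vs \<subseteq> carrier_vec n \<Longrightarrow> span_list n vs \<subseteq> carrier_vec n"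
  by (induct vs) auto

lemma zero_in_span_list: "set vs \<subseteq> carrier_vec n \<Longrightarrow> 0\<^sub>v n \<in> span_list n vs"
proof (induct vs)
  case (Cons a vs)
  then have e: "0\<^sub>v n + 0 \<cdot>\<^sub>v a = 0\<^sub>v n" by auto
  have "0\<^sub>v n \<in> span_list n vs" using Cons by simp
  then have "0\<^sub>v n + 0 \<cdot>\<^sub>v a \<in> span_list n (a # vs)"
    unfolding span_list.simps mem_Collect_eq by blast
  then show ?case unfolding e .
qed simp

lemma in_span_list: "set vs \<subseteq> carrier_vec n \<Longrightarrow> u \<in> set vs \<Longrightarrow> u \<in> span_list n vs"
proof (induct vs)
  case (Cons a vs)
  show ?case
  proof (cases "u = a")
    case True
    have e: "0\<^sub>v n + 1 \<cdot>\<^sub>v a = u" using True Cons by auto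
    have "0\<^sub>v n \<in> span_list n vs" using zero_in_span_list[of vs n] Cons by simp
    then have "0\<^sub>v n + 1 \<cdot>\<^sub>v a \<in> span_list n (a # vs)"
      unfolding span_list.simps mem_Collect_eq by blast
    then show ?thesis unfolding e .
  next
    case False
    then have uc: "u \<in> carrier_vec n" and "u \<in> span_list n vs" using Cons by auto
    moreover have e: "u + 0 \<cdot>\<^sub>v a = u" using uc Cons by auto
    ultimately have "u + 0 \<cdot>\<^sub>v a \<in> span_list n (a # vs)"
      unfolding span_list.simps mem_Collect_eq by blast
    then show ?thesis unfolding e .
  qed
qed simp

lemma orthogonal_span_list:
  assumes "set vs \<subseteq> carrier_vec n" "x \<in> carrier_vec n"
    and "\<And>u. u \<in> set vs \<Longrightarrow> conjugate u \<bullet> x = 0"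
  shows "y \<in> span_list n vs \<Longrightarrow> conjugate y \<bullet> x = 0"
  using assms
proof (induct vs arbitrary: y)
  case (Cons a vs)
  obtain z t where y: "y = z + t \<cdot>\<^sub>v a" "z \<in> span_list n vs" using Cons(2) by auto
  have z: "z \<in> carrier_vec n" using span_list_carrier[of vs n] Cons y by auto
  have a: "a \<in> carrier_vec n" using Cons by auto
  have "conjugate y \<bullet> x = (\<Sum>i<n. cnj (z$i) * x$i) + cnj t * (\<Sum>i<n. cnj (a$i) * x$i)"
    using y z a Cons by (simp add: cscalar_prod_sum[of _ n] algebra_simps sum.distrib sum_distrib_left)
  also have "\<dots> = conjugate z \<bullet> x + cnj t * (conjugate a \<bullet> x)"
    using z a Cons by (simp add: cscalar_prod_sum[of _ n])
  also have "\<dots> = 0" using Cons y z by auto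
  finally show ?case .
qed simp

lemma proj_span_list_ex: "set vs \<subseteq> carrier_vec n \<Longrightarrow> \<exists>P. is_proj n P \<and> mat_range n P = span_list n vs"
proof (induct vs)
  case Nil
  show ?case using zero_proj by (intro exI[of _ "0\<^sub>m n n"]) simp
next
  case (Cons a vs)
  then obtain Q where Q: "is_proj n Q" "mat_range n Q = span_list n vs" by auto
  obtain P where "is_proj n P" "mat_range n P = {x + t \<cdot>\<^sub>v a | x t. x \<in> mat_range n Q}"
    using proj_extend[OF Q(1)] Cons(2) by (meson list.set_intros(1) subsetD)
  then show ?case unfolding span_list.simps Q(2)[symmetric] by blast
qed

lemma proj_compl:
  assumes Q: "is_proj n Q"
  shows "is_proj n (1\<^sub>m n - Q)" "mat_range n (1\<^sub>m n - Q) = {v \<in> carrier_vec n. Q *\<^sub>v v = 0\<^sub>v n}"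
proof -
  let ?P = "1\<^sub>m n - Q"
  have QC: "Q \<in> carrier_mat n n" and QA: "adj Q = Q" using Q by (auto simp: is_proj_def)
  have PC: "?P \<in> carrier_mat n n" using QC by auto
  have Pv: "?P *\<^sub>v v = v - Q *\<^sub>v v" if "v \<in> carrier_vec n" for v
    using QC that by (simp add: minus_mult_distrib_mat_vec[of _ n n])
  have QPv: "Q *\<^sub>v (?P *\<^sub>v v) = 0\<^sub>v n" if v: "v \<in> carrier_vec n" for v
    using Pv[OF v] v QC proj_mult_vec_idem[OF Q v] by (simp add: mult_minus_distrib_mat_vec[OF QC])
  have range: "mat_range n ?P = {v \<in> carrier_vec n. Q *\<^sub>v v = 0\<^sub>v n}"
  proof
    show "mat_range n ?P \<subseteq> {v \<in> carrier_vec n. Q *\<^sub>v v = 0\<^sub>v n}" using QPv PC by auto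
    show "{v \<in> carrier_vec n. Q *\<^sub>v v = 0\<^sub>v n} \<subseteq> mat_range n ?P"
    proof
      fix x assume "x \<in> {v \<in> carrier_vec n. Q *\<^sub>v v = 0\<^sub>v n}"
      then have x: "x \<in> carrier_vec n" "Q *\<^sub>v x = 0\<^sub>v n" by auto
      then have "?P *\<^sub>v x = x" using Pv[OF x(1)] by simp
      then show "x \<in> mat_range n ?P" using x(1) by (metis image_eqI)
    qed
  qed
  have PP: "?P * ?P = ?P"
  proof (rule eq_mat_via_mult_vec[of _ n n])
    fix v :: "complex vec" assume v: "v \<in> carrier_vec n"
    have "?P *\<^sub>v (?P *\<^sub>v v) = ?P *\<^sub>v v" using Pv[of "?P *\<^sub>v v"] QPv[OF v] PC v by simp
    then show "(?P * ?P) *\<^sub>v v = ?P *\<^sub>v v" using assoc_mult_mat_vec[OF PC PC v] by simp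
  qed (use PC in simp_all)
  have "adj ?P = ?P" using adj_minus[of "1\<^sub>m n" n n Q] QC QA by simp
  then show "is_proj n ?P" using PC PP by (simp add: is_proj_def)
  show "mat_range n ?P = {v \<in> carrier_vec n. Q *\<^sub>v v = 0\<^sub>v n}" by (rule range)
qed

lemma proj_range_eq_compl_kernel:
  assumes P: "is_proj n P"
  shows "mat_range n P = {u \<in> carrier_vec n. (1\<^sub>m n - P) *\<^sub>v u = 0\<^sub>v n}"
proof -
  have "1\<^sub>m n - (1\<^sub>m n - P) = P" using proj_carrier[OF P] by (intro eq_matI) auto
  then show ?thesis using proj_compl(2)[OF proj_compl(1)[OF P]] by simp
qed

lemma cscalar_col_adj:
  assumes Y: "Y \<in> carrier_mat m n" and x: "x \<in> carrier_vec n" and j: "j < m"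
  shows "conjugate (col (adj Y) j) \<bullet> x = (Y *\<^sub>v x) $ j"
proof -
  have "conjugate (col (adj Y) j) \<bullet> x = (\<Sum>i<n. cnj (col (adj Y) j $ i) * x $ i)"
    using x Y j by (intro cscalar_prod_sum) auto
  also have "\<dots> = (\<Sum>i<n. Y $$ (j,i) * x $ i)" using Y j by (intro sum.cong) auto
  also have "\<dots> = (Y *\<^sub>v x) $ j" using Y j x by (simp add: row_vec_sum[of _ m n])
  finally show ?thesis .
qed

text \<open>The kernel of Y is the orthocomplement of the span of the columns of adj Y.\<close>

lemma proj_kernel_ex:
  assumes Y: "Y \<in> carrier_mat m n"
  shows "\<exists>P. is_proj n P \<and> mat_range n P = {v \<in> carrier_vec n. Y *\<^sub>v v = 0\<^sub>v m}"
proof -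
  define vs where "vs = map (col (adj Y)) [0..<m]"
  have vsC: "set vs \<subseteq> carrier_vec n" using Y by (auto simp: vs_def)
  obtain Q where Q: "is_proj n Q" "mat_range n Q = span_list n vs" using proj_span_list_ex[OF vsC] by auto
  have QC: "Q \<in> carrier_mat n n" using Q by (simp add: is_proj_def)
  have kernel_eq: "(Y *\<^sub>v x = 0\<^sub>v m) \<longleftrightarrow> (Q *\<^sub>v x = 0\<^sub>v n)" if x: "x \<in> carrier_vec n" for x
  proof
    assume Yx: "Y *\<^sub>v x = 0\<^sub>v m"
    have orth: "\<And>u. u \<in> set vs \<Longrightarrow> conjugate u \<bullet> x = 0"
      using cscalar_col_adj[OF Y x] Yx by (auto simp: vs_def)
    have "Q *\<^sub>v x \<in> span_list n vs" using Q(2) x by blast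
    then have "conjugate (Q *\<^sub>v x) \<bullet> x = 0" using orthogonal_span_list[OF vsC x orth] by blast
    moreover have "conjugate (Q *\<^sub>v x) \<bullet> (Q *\<^sub>v x) = conjugate (Q *\<^sub>v (Q *\<^sub>v x)) \<bullet> x"
      using proj_cscalar_swap[OF Q(1), of "Q *\<^sub>v x" x] x QC by simp
    ultimately have "conjugate (Q *\<^sub>v x) \<bullet> (Q *\<^sub>v x) = 0"
      using proj_mult_vec_idem[OF Q(1) x] by simp
    then show "Q *\<^sub>v x = 0\<^sub>v n" using cscalar_self_eq_zero[of "Q *\<^sub>v x" n] x QC by simp
  next
    assume Qx: "Q *\<^sub>v x = 0\<^sub>v n"
    show "Y *\<^sub>v x = 0\<^sub>v m"
    proof (rule eq_vecI)
      fix j assume "j < dim_vec (0\<^sub>v m :: complex vec)"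
      then have j: "j < m" by simp
      have uC: "col (adj Y) j \<in> carrier_vec n" using Y j by simp
      have "col (adj Y) j \<in> span_list n vs" using in_span_list[OF vsC] j by (auto simp: vs_def)
      then have Qu: "Q *\<^sub>v col (adj Y) j = col (adj Y) j"
        using proj_fixes_range[OF Q(1)] Q(2) by simp
      have "(Y *\<^sub>v x) $ j = conjugate (Q *\<^sub>v col (adj Y) j) \<bullet> x"
        using cscalar_col_adj[OF Y x j] Qu by simp
      also have "\<dots> = 0" using proj_cscalar_swap[OF Q(1) uC x] Qx uC by simp
      finally show "(Y *\<^sub>v x) $ j = (0\<^sub>v m :: complex vec) $ j" using j by simp
    qed (use Y in simp)
  qed
  have "{v \<in> carrier_vec n. Y *\<^sub>v v = 0\<^sub>v m} = {v \<in> carrier_vec n. Q *\<^sub>v v = 0\<^sub>v n}"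
    using kernel_eq by blast
  then show ?thesis using proj_compl[OF Q(1)] by (intro exI[of _ "1\<^sub>m n - Q"]) simp
qed

section \<open>Spectral projections\<close>

lemma smult_one_mult_vec: "v \<in> carrier_vec n \<Longrightarrow> (c \<cdot>\<^sub>m 1\<^sub>m n) *\<^sub>v v = (c::complex) \<cdot>\<^sub>v v"
  by (rule eq_vecI) (auto simp: row_vec_sum[of _ n n] if_distrib cong: if_cong)

lemma eigspace_eq_kernel:
  assumes X: "X \<in> carrier_mat n n"
  shows "eigspace X l = {v \<in> carrier_vec n. (X - complex_of_real l \<cdot>\<^sub>m 1\<^sub>m n) *\<^sub>v v = 0\<^sub>v n}"
proof -
  have "((X - complex_of_real l \<cdot>\<^sub>m 1\<^sub>m n) *\<^sub>v v = 0\<^sub>v n) = (X *\<^sub>v v = complex_of_real l \<cdot>\<^sub>v v)"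
    if v: "v \<in> carrier_vec n" for v
  proof -
    have "(X - complex_of_real l \<cdot>\<^sub>m 1\<^sub>m n) *\<^sub>v v = X *\<^sub>v v - complex_of_real l \<cdot>\<^sub>v v"
      using X v minus_mult_distrib_mat_vec[of X n n "complex_of_real l \<cdot>\<^sub>m 1\<^sub>m n" v]
      by (simp add: smult_one_mult_vec)
    then show ?thesis using X v vec_minus_eq_zero_iff[of "X *\<^sub>v v" n "complex_of_real l \<cdot>\<^sub>v v"]
      by simp
  qed
  then show ?thesis using X by (auto simp: eigspace_def)
qed

lemma orth_proj_eigspace:
  assumes X: "X \<in> carrier_mat n n"
  shows "is_proj n (orth_proj n (eigspace X l))" "mat_range n (orth_proj n (eigspace X l)) = eigspace X l"
proof -
  have "X - complex_of_real l \<cdot>\<^sub>m 1\<^sub>m n \<in> carrier_mat n n" using X by auto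
  then obtain P where "is_proj n P" "mat_range n P = eigspace X l"
    using proj_kernel_ex unfolding eigspace_eq_kernel[OF X, of l] by blast
  then show "is_proj n (orth_proj n (eigspace X l))" "mat_range n (orth_proj n (eigspace X l)) = eigspace X l"
    using orth_proj_eqI by auto
qed

lemma orth_proj_eigspace_non_eigenvalue:
  assumes X: "X \<in> carrier_mat n n" and "\<not> eigenvalue X (complex_of_real l)"
  shows "orth_proj n (eigspace X l) = 0\<^sub>m n n"
proof -
  have "eigspace X l = {0\<^sub>v n}"
    using assms by (auto simp: eigspace_def eigenvalue_def eigenvector_def)
  then show ?thesis using orth_proj_eqI[OF zero_proj] by simp
qed

lemma finite_nonpos_real_eigenvalues:
  assumes X: "X \<in> carrier_mat k k"
  shows "finite {l::real. eigenvalue X (complex_of_real l) \<and> l \<le> 0}"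
proof -
  have "coeff (char_poly X) k = 1" using degree_monic_char_poly[OF X] by simp
  then have "char_poly X \<noteq> 0" by auto
  then have "finite (complex_of_real -` {z. poly (char_poly X) z = 0})"
    by (intro finite_vimageI poly_roots_finite) (auto simp: inj_def)
  moreover have "{l::real. eigenvalue X (complex_of_real l) \<and> l \<le> 0} \<subseteq> complex_of_real -` {z. poly (char_poly X) z = 0}"
    using eigenvalue_root_char_poly[OF X] by auto
  ultimately show ?thesis by (rule finite_subset[rotated])
qed

lemma tr_foldr_add_mult:
  assumes "\<And>l. l \<in> set xs \<Longrightarrow> f l \<in> carrier_mat k k" "Y \<in> carrier_mat k k"
  shows "foldr (\<lambda>l acc. f l + acc) xs (0\<^sub>m k k) \<in> carrier_mat k k \<and>
    tr (foldr (\<lambda>l acc. f l + acc) xs (0\<^sub>m k k) * Y) = (\<Sum>l\<leftarrow>xs. tr (f l * Y))"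
  using assms(1)
proof (induct xs)
  case (Cons a xs)
  let ?F = "foldr (\<lambda>l acc. f l + acc) xs (0\<^sub>m k k)"
  have F: "?F \<in> carrier_mat k k" and IH: "tr (?F * Y) = (\<Sum>l\<leftarrow>xs. tr (f l * Y))"
    using Cons by auto
  have fa: "f a \<in> carrier_mat k k" using Cons by auto
  have "tr ((f a + ?F) * Y) = tr (f a * Y) + tr (?F * Y)"
    using add_mult_distrib_mat[OF fa F assms(2)] tr_add[of "f a * Y" k "?F * Y"] fa F assms(2) by simp
  then show ?case using IH F fa by simp
qed (use assms(2) in simp)

lemma tr_nonpos_proj_mult:
  assumes X: "X \<in> carrier_mat k k" and Y: "Y \<in> carrier_mat k k"
  shows "tr (nonpos_proj X * Y) =
    (\<Sum>l\<in>{l::real. eigenvalue X (complex_of_real l) \<and> l \<le> 0}. tr (orth_proj k (eigspace X l) * Y))"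
proof -
  let ?S = "{l::real. eigenvalue X (complex_of_real l) \<and> l \<le> 0}"
  have "\<And>l. orth_proj k (eigspace X l) \<in> carrier_mat k k"
    using orth_proj_eigspace(1)[OF X] proj_carrier by blast
  then have "tr (nonpos_proj X * Y) = (\<Sum>l\<leftarrow>sorted_list_of_set ?S. tr (orth_proj k (eigspace X l) * Y))"
    unfolding nonpos_proj_def using X tr_foldr_add_mult[OF _ Y, where xs="sorted_list_of_set ?S"] by simp
  also have "\<dots> = (\<Sum>l\<in>?S. tr (orth_proj k (eigspace X l) * Y))"
    using finite_nonpos_real_eigenvalues[OF X] by (simp add: sum_list_distinct_conv_sum_set)
  finally show ?thesis .
qed

section \<open>Conjugation by an isometry\<close>

locale isometry =
  fixes W :: "complex mat" and m n :: nat
  assumes W_carrier: "W \<in> carrier_mat m n" and adj_W_W: "adj W * W = 1\<^sub>m n"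
begin

lemma adjW_carrier: "adj W \<in> carrier_mat n m"
  using W_carrier by simp

lemma adjW_W_mult_vec: "u \<in> carrier_vec n \<Longrightarrow> adj W *\<^sub>v (W *\<^sub>v u) = u"
  using assoc_mult_mat_vec[OF adjW_carrier W_carrier, of u] adj_W_W by simp

lemma W_mult_vec_carrier: "u \<in> carrier_vec n \<Longrightarrow> W *\<^sub>v u \<in> carrier_vec m"
  using W_carrier by simp

lemma adjW_mult_vec_carrier: "v \<in> carrier_vec m \<Longrightarrow> adj W *\<^sub>v v \<in> carrier_vec n"
  using adjW_carrier by simp

lemma conj_mult_vec:
  assumes "A \<in> carrier_mat n n" "v \<in> carrier_vec m"
  shows "(W * A * adj W) *\<^sub>v v = W *\<^sub>v (A *\<^sub>v (adj W *\<^sub>v v))"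
proof -
  have WA: "W * A \<in> carrier_mat m n" using W_carrier assms by simp
  show ?thesis
    using assoc_mult_mat_vec[OF WA adjW_carrier assms(2)]
      assoc_mult_mat_vec[OF W_carrier assms(1) adjW_mult_vec_carrier[OF assms(2)]] by simp
qed

lemma conj_carrier:
  assumes "A \<in> carrier_mat n n"
  shows "W * A * adj W \<in> carrier_mat m m"
  using mult_carrier_mat[OF mult_carrier_mat[OF W_carrier assms] adjW_carrier] .

lemma adj_conj:
  assumes "A \<in> carrier_mat n n"
  shows "adj (W * A * adj W) = W * adj A * adj W"
proof -
  have WA: "W * A \<in> carrier_mat m n" using W_carrier assms by simp
  have "adj (W * A * adj W) = adj (adj W) * adj (W * A)" using adj_mult[OF WA adjW_carrier] .
  also have "\<dots> = W * (adj A * adj W)" using adj_mult[OF W_carrier assms] by simp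
  also have "\<dots> = W * adj A * adj W" using assms W_carrier by (simp add: assoc_mult_mat[of _ m n _ n _ m])
  finally show ?thesis .
qed

lemma conj_mult_conj:
  assumes A: "A \<in> carrier_mat n n" and B: "B \<in> carrier_mat n n"
  shows "(W * A * adj W) * (W * B * adj W) = W * (A * B) * adj W"
proof (rule eq_mat_via_mult_vec[of _ m m])
  have AB: "A * B \<in> carrier_mat n n" using A B by simp
  fix v :: "complex vec" assume v: "v \<in> carrier_vec m"
  have c1: "B *\<^sub>v (adj W *\<^sub>v v) \<in> carrier_vec n" using B adjW_mult_vec_carrier[OF v] by simp
  have "((W * A * adj W) * (W * B * adj W)) *\<^sub>v v = (W * A * adj W) *\<^sub>v ((W * B * adj W) *\<^sub>v v)"
    using assoc_mult_mat_vec[OF conj_carrier[OF A] conj_carrier[OF B] v] .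
  also have "\<dots> = W *\<^sub>v (A *\<^sub>v (B *\<^sub>v (adj W *\<^sub>v v)))"
    using conj_mult_vec[OF B v] conj_mult_vec[OF A W_mult_vec_carrier[OF c1]] adjW_W_mult_vec[OF c1] by simp
  also have "\<dots> = (W * (A * B) * adj W) *\<^sub>v v"
    using conj_mult_vec[OF AB v] assoc_mult_mat_vec[OF A B adjW_mult_vec_carrier[OF v]] by simp
  finally show "((W * A * adj W) * (W * B * adj W)) *\<^sub>v v = (W * (A * B) * adj W) *\<^sub>v v" .
qed (use conj_carrier[OF A] conj_carrier[OF B] A B conj_carrier[of "A * B"] in simp_all)

lemma conj_minus_smult_conj:
  assumes A: "A \<in> carrier_mat n n" and B: "B \<in> carrier_mat n n"
  shows "W * A * adj W - c \<cdot>\<^sub>m (W * B * adj W) = W * (A - c \<cdot>\<^sub>m B) * adj W"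
proof (rule eq_mat_via_mult_vec[of _ m m])
  have AB: "A - c \<cdot>\<^sub>m B \<in> carrier_mat n n" using A B by simp
  have cB: "c \<cdot>\<^sub>m (W * B * adj W) \<in> carrier_mat m m" using conj_carrier[OF B] by simp
  fix v :: "complex vec" assume v: "v \<in> carrier_vec m"
  have wv: "adj W *\<^sub>v v \<in> carrier_vec n" using adjW_mult_vec_carrier[OF v] .
  have "(W * A * adj W - c \<cdot>\<^sub>m (W * B * adj W)) *\<^sub>v v = (W * A * adj W) *\<^sub>v v - (c \<cdot>\<^sub>m (W * B * adj W)) *\<^sub>v v"
    by (rule minus_mult_distrib_mat_vec[OF conj_carrier[OF A] cB v])
  also have "\<dots> = W *\<^sub>v (A *\<^sub>v (adj W *\<^sub>v v)) - c \<cdot>\<^sub>v (W *\<^sub>v (B *\<^sub>v (adj W *\<^sub>v v)))"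
    using conj_mult_vec[OF A v] conj_mult_vec[OF B v] smult_mat_mult_vec_assoc[OF conj_carrier[OF B] v] by simp
  also have "\<dots> = W *\<^sub>v (A *\<^sub>v (adj W *\<^sub>v v) - c \<cdot>\<^sub>v (B *\<^sub>v (adj W *\<^sub>v v)))"
    using mult_minus_distrib_mat_vec[OF W_carrier, of "A *\<^sub>v (adj W *\<^sub>v v)" "c \<cdot>\<^sub>v (B *\<^sub>v (adj W *\<^sub>v v))"]
      mult_mat_vec[OF W_carrier, of "B *\<^sub>v (adj W *\<^sub>v v)" c] A B wv by simp
  also have "\<dots> = W *\<^sub>v ((A - c \<cdot>\<^sub>m B) *\<^sub>v (adj W *\<^sub>v v))"
    using minus_mult_distrib_mat_vec[OF A _ wv, of "c \<cdot>\<^sub>m B"] smult_mat_mult_vec_assoc[OF B wv] B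
      by simp
  also have "\<dots> = (W * (A - c \<cdot>\<^sub>m B) * adj W) *\<^sub>v v" using conj_mult_vec[OF AB v] by simp
  finally show "(W * A * adj W - c \<cdot>\<^sub>m (W * B * adj W)) *\<^sub>v v = (W * (A - c \<cdot>\<^sub>m B) * adj W) *\<^sub>v v" .
qed (use conj_carrier[OF A] conj_carrier[OF B] conj_carrier[of "A - c \<cdot>\<^sub>m B"] A B in simp_all)

lemma W_mult_vec_eq_zero_iff: "u \<in> carrier_vec n \<Longrightarrow> (W *\<^sub>v u = 0\<^sub>v m) \<longleftrightarrow> (u = 0\<^sub>v n)"
  by (metis adjW_W_mult_vec mult_mat_zero_vec adjW_carrier W_carrier)

lemma proj_conj:
  assumes P: "is_proj n P"
  shows "is_proj m (W * P * adj W)" "mat_range m (W * P * adj W) = (\<lambda>u. W *\<^sub>v u) ` mat_range n P"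
proof -
  have PC: "P \<in> carrier_mat n n" and PP: "P * P = P" and PA: "adj P = P" using P by (auto simp: is_proj_def)
  have QC: "W * P * adj W \<in> carrier_mat m m" using conj_carrier[OF PC] .
  have QQ: "(W * P * adj W) * (W * P * adj W) = W * P * adj W"
    using conj_mult_conj[OF PC PC] PP by simp
  have QA: "adj (W * P * adj W) = W * P * adj W" using adj_conj[OF PC] PA by simp
  show "is_proj m (W * P * adj W)" using QC QQ QA by (simp add: is_proj_def)
  show "mat_range m (W * P * adj W) = (\<lambda>u. W *\<^sub>v u) ` mat_range n P"
  proof
    show "mat_range m (W * P * adj W) \<subseteq> (\<lambda>u. W *\<^sub>v u) ` mat_range n P"
    proof
      fix y assume "y \<in> mat_range m (W * P * adj W)"
      then obtain v where v: "v \<in> carrier_vec m" "y = (W * P * adj W) *\<^sub>v v" by (elim imageE)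
      have "y = W *\<^sub>v (P *\<^sub>v (adj W *\<^sub>v v))" using v conj_mult_vec[OF PC v(1)] by simp
      moreover have "P *\<^sub>v (adj W *\<^sub>v v) \<in> mat_range n P"
        by (rule imageI[OF adjW_mult_vec_carrier[OF v(1)]])
      ultimately show "y \<in> (\<lambda>u. W *\<^sub>v u) ` mat_range n P" by (rule image_eqI)
    qed
    show "(\<lambda>u. W *\<^sub>v u) ` mat_range n P \<subseteq> mat_range m (W * P * adj W)"
    proof
      fix y assume "y \<in> (\<lambda>u. W *\<^sub>v u) ` mat_range n P"
      then obtain u where u2: "y = W *\<^sub>v u" and u1: "u \<in> mat_range n P" by (rule imageE)
      note u = u1 u2
      have uc: "u \<in> carrier_vec n" using u proj_range_carrier[OF P] by auto
      have "(W * P * adj W) *\<^sub>v y = W *\<^sub>v (P *\<^sub>v u)"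
        using conj_mult_vec[OF PC W_mult_vec_carrier[OF uc]] adjW_W_mult_vec[OF uc] u by simp
      also have "\<dots> = y" using proj_fixes_range[OF P u(1)] u by simp
      finally show "y \<in> mat_range m (W * P * adj W)"
        by (rule image_eqI[OF sym]) (use u W_mult_vec_carrier[OF uc] in simp)
    qed
  qed
qed

text \<open>On the zero eigenspace the range of W no longer exhausts the eigenvectors: the whole
  orthocomplement of the range is added.\<close>

lemma proj_one_minus_conj_compl:
  assumes P: "is_proj n P"
  shows "is_proj m (1\<^sub>m m - W * (1\<^sub>m n - P) * adj W)"
    "mat_range m (1\<^sub>m m - W * (1\<^sub>m n - P) * adj W) = {v \<in> carrier_vec m. adj W *\<^sub>v v \<in> mat_range n P}"
proof -
  have Pc: "is_proj n (1\<^sub>m n - P)" by (rule proj_compl(1)[OF P])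
  have PcC: "1\<^sub>m n - P \<in> carrier_mat n n" using proj_carrier[OF Pc] .
  show "is_proj m (1\<^sub>m m - W * (1\<^sub>m n - P) * adj W)" by (rule proj_compl(1)[OF proj_conj(1)[OF Pc]])
  have "(W * (1\<^sub>m n - P) * adj W) *\<^sub>v v = 0\<^sub>v m \<longleftrightarrow> adj W *\<^sub>v v \<in> mat_range n P"
    if v: "v \<in> carrier_vec m" for v
    using conj_mult_vec[OF PcC v] W_mult_vec_eq_zero_iff[of "(1\<^sub>m n - P) *\<^sub>v (adj W *\<^sub>v v)"]
      proj_range_eq_compl_kernel[OF P] PcC adjW_mult_vec_carrier[OF v] by auto
  then show "mat_range m (1\<^sub>m m - W * (1\<^sub>m n - P) * adj W) = {v \<in> carrier_vec m. adj W *\<^sub>v v \<in> mat_range n P}"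
    using proj_compl(2)[OF proj_conj(1)[OF Pc]] by auto
qed

lemma eigspace_conj:
  assumes X: "X \<in> carrier_mat n n" and l: "l \<noteq> 0"
  shows "eigspace (W * X * adj W) l = (\<lambda>u. W *\<^sub>v u) ` eigspace X l"
proof
  let ?c = "complex_of_real l"
  have c0: "?c \<noteq> 0" using l by simp
  have d: "dim_row (W * X * adj W) = m" using W_carrier by simp
  show "eigspace (W * X * adj W) l \<subseteq> (\<lambda>u. W *\<^sub>v u) ` eigspace X l"
  proof
    fix v assume "v \<in> eigspace (W * X * adj W) l"
    then have v: "v \<in> carrier_vec m" "(W * X * adj W) *\<^sub>v v = ?c \<cdot>\<^sub>v v"
      using d by (auto simp: eigspace_def)
    define u where "u = adj W *\<^sub>v v"
    have uc: "u \<in> carrier_vec n" using adjW_mult_vec_carrier[OF v(1)] by (simp add: u_def)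
    have Xuc: "X *\<^sub>v u \<in> carrier_vec n" using X uc by simp
    have e1: "W *\<^sub>v (X *\<^sub>v u) = ?c \<cdot>\<^sub>v v"
      using v conj_mult_vec[OF X v(1)] by (simp add: u_def)
    have "v = (1 / ?c) \<cdot>\<^sub>v (?c \<cdot>\<^sub>v v)" using c0 by (simp add: smult_smult_assoc)
    also have "\<dots> = W *\<^sub>v ((1 / ?c) \<cdot>\<^sub>v (X *\<^sub>v u))"
      using e1 mult_mat_vec[OF W_carrier Xuc] by simp
    finally have vW: "v = W *\<^sub>v ((1 / ?c) \<cdot>\<^sub>v (X *\<^sub>v u))" .
    have yc: "(1 / ?c) \<cdot>\<^sub>v (X *\<^sub>v u) \<in> carrier_vec n" using Xuc by simp
    have "adj W *\<^sub>v v = adj W *\<^sub>v (W *\<^sub>v ((1 / ?c) \<cdot>\<^sub>v (X *\<^sub>v u)))"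
      by (subst vW, rule refl)
    then have uy: "u = (1 / ?c) \<cdot>\<^sub>v (X *\<^sub>v u)" using adjW_W_mult_vec[OF yc] by (simp add: u_def)
    have vu: "v = W *\<^sub>v u" using vW uy by simp
    have "W *\<^sub>v (X *\<^sub>v u) = W *\<^sub>v (?c \<cdot>\<^sub>v u)"
      using e1 vu mult_mat_vec[OF W_carrier uc] by simp
    then have "adj W *\<^sub>v (W *\<^sub>v (X *\<^sub>v u)) = adj W *\<^sub>v (W *\<^sub>v (?c \<cdot>\<^sub>v u))"
      by simp
    then have "X *\<^sub>v u = ?c \<cdot>\<^sub>v u"
      using adjW_W_mult_vec[OF Xuc] adjW_W_mult_vec[of "?c \<cdot>\<^sub>v u"] uc by simp
    then have "u \<in> eigspace X l" using uc X by (simp add: eigspace_def)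
    then show "v \<in> (\<lambda>u. W *\<^sub>v u) ` eigspace X l" using vu by (rule image_eqI[rotated])
  qed
  show "(\<lambda>u. W *\<^sub>v u) ` eigspace X l \<subseteq> eigspace (W * X * adj W) l"
  proof
    fix v assume "v \<in> (\<lambda>u. W *\<^sub>v u) ` eigspace X l"
    then obtain u where vu: "v = W *\<^sub>v u" and "u \<in> eigspace X l" by (rule imageE)
    then have u: "u \<in> carrier_vec n" "X *\<^sub>v u = ?c \<cdot>\<^sub>v u"
      using X by (auto simp: eigspace_def)
    have "(W * X * adj W) *\<^sub>v v = W *\<^sub>v (X *\<^sub>v u)"
      using conj_mult_vec[OF X W_mult_vec_carrier[OF u(1)]] adjW_W_mult_vec[OF u(1)] vu by simp
    also have "\<dots> = ?c \<cdot>\<^sub>v v" using u mult_mat_vec[OF W_carrier u(1)] vu by simp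
    finally show "v \<in> eigspace (W * X * adj W) l"
      using d vu W_mult_vec_carrier[OF u(1)] by (simp add: eigspace_def)
  qed
qed

lemma eigspace_conj_zero:
  assumes X: "X \<in> carrier_mat n n"
  shows "eigspace (W * X * adj W) 0 = {v \<in> carrier_vec m. adj W *\<^sub>v v \<in> eigspace X 0}"
proof -
  have "(W * X * adj W) *\<^sub>v v = 0\<^sub>v m \<longleftrightarrow> X *\<^sub>v (adj W *\<^sub>v v) = 0\<^sub>v n" if v: "v \<in> carrier_vec m" for v
    using conj_mult_vec[OF X v] W_mult_vec_eq_zero_iff[of "X *\<^sub>v (adj W *\<^sub>v v)"] X adjW_mult_vec_carrier[OF v]
    by simp
  then show ?thesis using X W_carrier adjW_mult_vec_carrier by (auto simp: eigspace_def)
qed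

lemma tr_conj: "Y \<in> carrier_mat n n \<Longrightarrow> tr (W * Y * adj W) = tr Y"
  using tr_mult_comm[OF mult_carrier_mat[OF W_carrier] adjW_carrier, of Y]
    assoc_mult_mat[OF adjW_carrier W_carrier, of Y n] adj_W_W by simp

lemma tr_conj_mult_conj:
  assumes P: "P \<in> carrier_mat n n" and Y: "Y \<in> carrier_mat n n"
  shows "tr ((W * P * adj W) * (W * Y * adj W)) = tr (P * Y)"
proof -
  have PY: "P * Y \<in> carrier_mat n n" using P Y by simp
  have "tr ((W * P * adj W) * (W * Y * adj W)) = tr (adj W * (W * (P * Y)))"
    using conj_mult_conj[OF P Y] tr_mult_comm[OF mult_carrier_mat[OF W_carrier PY] adjW_carrier] by simp
  also have "adj W * (W * (P * Y)) = P * Y"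
    using assoc_mult_mat[OF adjW_carrier W_carrier PY] adj_W_W left_mult_one_mat[OF PY] by simp
  finally show ?thesis .
qed

lemma tr_orth_proj_eigspace_conj:
  assumes X: "X \<in> carrier_mat n n" and Y: "Y \<in> carrier_mat n n"
  shows "tr (orth_proj m (eigspace (W * X * adj W) l) * (W * Y * adj W)) = tr (orth_proj n (eigspace X l) * Y)"
proof -
  define P where "P = orth_proj n (eigspace X l)"
  have P: "is_proj n P" "mat_range n P = eigspace X l" using orth_proj_eigspace[OF X] by (auto simp: P_def)
  have PC: "P \<in> carrier_mat n n" using P proj_carrier by blast
  show ?thesis
  proof (cases "l = 0")
    case False
    have "orth_proj m (eigspace (W * X * adj W) l) = W * P * adj W"
      using orth_proj_eqI[OF proj_conj(1)[OF P(1)]] proj_conj(2)[OF P(1)] P(2) eigspace_conj[OF X False] by simp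
    then show ?thesis using tr_conj_mult_conj[OF PC Y] by (simp add: P_def)
  next
    case True
    let ?Q = "W * (1\<^sub>m n - P) * adj W"
    have QC: "?Q \<in> carrier_mat m m" and YC: "W * Y * adj W \<in> carrier_mat m m"
      using conj_carrier[OF proj_carrier[OF proj_compl(1)[OF P(1)]]] conj_carrier[OF Y] by auto
    have "orth_proj m (eigspace (W * X * adj W) l) = 1\<^sub>m m - ?Q"
      using orth_proj_eqI[OF proj_one_minus_conj_compl(1)[OF P(1)]] proj_one_minus_conj_compl(2)[OF P(1)]
        P(2) eigspace_conj_zero[OF X] True by simp
    moreover have "tr ((1\<^sub>m m - ?Q) * (W * Y * adj W)) = tr (W * Y * adj W) - tr (?Q * (W * Y * adj W))"
      using minus_mult_distrib_mat[OF one_carrier_mat QC YC] left_mult_one_mat[OF YC]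
        tr_minus[OF mult_carrier_mat[OF one_carrier_mat YC] mult_carrier_mat[OF QC YC]] by simp
    moreover have "tr ((1\<^sub>m n - P) * Y) = tr Y - tr (P * Y)"
      using minus_mult_distrib_mat[OF one_carrier_mat PC Y] left_mult_one_mat[OF Y]
        tr_minus[OF mult_carrier_mat[OF one_carrier_mat Y] mult_carrier_mat[OF PC Y]] by simp
    ultimately show ?thesis
      using tr_conj[OF Y] tr_conj_mult_conj[OF proj_carrier[OF proj_compl(1)[OF P(1)]] Y] by (simp add: P_def)
  qed
qed

lemma tr_nonpos_proj_conj:
  assumes X: "X \<in> carrier_mat n n" and Y: "Y \<in> carrier_mat n n"
  shows "tr (nonpos_proj (W * X * adj W) * (W * Y * adj W)) = tr (nonpos_proj X * Y)"
proof -
  let ?X' = "W * X * adj W" and ?Y' = "W * Y * adj W"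
  let ?S = "{l::real. eigenvalue X (complex_of_real l) \<and> l \<le> 0}"
  let ?S' = "{l::real. eigenvalue ?X' (complex_of_real l) \<and> l \<le> 0}"
  let ?T = "\<lambda>l. tr (orth_proj n (eigspace X l) * Y)"
  have X': "?X' \<in> carrier_mat m m" and Y': "?Y' \<in> carrier_mat m m" using conj_carrier X Y by auto
  have fS: "finite ?S" and fS': "finite ?S'" using finite_nonpos_real_eigenvalues X X' by auto
  have z: "\<And>l. \<not> eigenvalue X (complex_of_real l) \<Longrightarrow> ?T l = 0"
    using orth_proj_eigspace_non_eigenvalue[OF X] Y by simp
  have z': "\<And>l. \<not> eigenvalue ?X' (complex_of_real l) \<Longrightarrow> ?T l = 0"
    using orth_proj_eigspace_non_eigenvalue[OF X'] Y' tr_orth_proj_eigspace_conj[OF X Y]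
      by (metis left_mult_zero_mat tr_zero)
  have "tr (nonpos_proj ?X' * ?Y') = (\<Sum>l\<in>?S'. tr (orth_proj m (eigspace ?X' l) * ?Y'))"
    by (rule tr_nonpos_proj_mult[OF X' Y'])
  also have "\<dots> = (\<Sum>l\<in>?S'. ?T l)" using tr_orth_proj_eigspace_conj[OF X Y] by simp
  also have "\<dots> = (\<Sum>l\<in>?S \<union> ?S'. ?T l)"
    by (rule sum.mono_neutral_right[symmetric]) (use fS fS' z' in auto)
  also have "\<dots> = (\<Sum>l\<in>?S. ?T l)"
    by (rule sum.mono_neutral_right) (use fS fS' z in auto)
  also have "\<dots> = tr (nonpos_proj X * Y)" by (rule tr_nonpos_proj_mult[OF X Y, symmetric])
  finally show ?thesis .
qed

end

text \<open>id_kron k W is the Kronecker product 1_k (x) W and kron_id V c is V (x) 1_c, both in the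
  index convention i * d2 + j used for composite systems.\<close>

definition id_kron :: "nat \<Rightarrow> complex mat \<Rightarrow> complex mat" where
  "id_kron k W = mat (k * dim_row W) (k * dim_col W) (\<lambda>(x,r). if x div dim_row W = r div dim_col W
      then W $$ (x mod dim_row W, r mod dim_col W) else 0)"

lemma id_kron_dims[simp]: "dim_row (id_kron k W) = k * dim_row W" "dim_col (id_kron k W) = k * dim_col W"
  by (auto simp: id_kron_def)

lemma id_kron_carrier: "W \<in> carrier_mat m n \<Longrightarrow> id_kron k W \<in> carrier_mat (k*m) (k*n)"
  by (auto simp: id_kron_def)

lemma id_kron_index:
  assumes W: "W \<in> carrier_mat m n" and x: "x < k*m" and r: "r < k*n"
  shows "id_kron k W $$ (x, r) = (if x div m = r div n then W $$ (x mod m, r mod n) else 0)"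
  using assms by (auto simp: id_kron_def)

lemma id_kron_mult_index:
  assumes W: "W \<in> carrier_mat m n" and S: "S \<in> carrier_mat (k*n) N"
  and i: "i < k" and j: "j < m" and s: "s < N"
  shows "(id_kron k W * S) $$ (i*m+j, s) = (\<Sum>p<n. W $$ (j,p) * S $$ (i*n+p, s))"
proof -
  have x: "i*m+j < k*m" by (rule mult_add_less_mult[OF i j])
  have "(id_kron k W * S) $$ (i*m+j, s) = (\<Sum>r<k*n. id_kron k W $$ (i*m+j, r) * S $$ (r, s))"
    by (rule index_mult_mat_sum[OF id_kron_carrier[OF W] S x s])
  also have "\<dots> = (\<Sum>a<k. \<Sum>p<n. id_kron k W $$ (i*m+j, a*n+p) * S $$ (a*n+p, s))"
    by (rule sum_lessThan_mult)
  also have "\<dots> = (\<Sum>a<k. \<Sum>p<n. if i = a then W $$ (j,p) * S $$ (a*n+p, s) else 0)"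
    using j x
    by (intro sum.cong refl) (simp add: id_kron_index[OF W x mult_add_less_mult])
  also have "\<dots> = (\<Sum>a<k. if i = a then (\<Sum>p<n. W $$ (j,p) * S $$ (a*n+p, s)) else 0)"
    by (simp add: sum_if_const)
  also have "\<dots> = (\<Sum>p<n. W $$ (j,p) * S $$ (i*n+p, s))" using i by (simp add: sum.delta)
  finally show ?thesis .
qed

lemma mult_adj_id_kron_index:
  assumes W: "W \<in> carrier_mat m n" and M: "M \<in> carrier_mat N (k*n)"
  and x: "x < N" and i: "i < k" and j: "j < m"
  shows "(M * adj (id_kron k W)) $$ (x, i*m+j) = (\<Sum>q<n. M $$ (x, i*n+q) * cnj (W $$ (j,q)))"
proof -
  have y: "i*m+j < k*m" by (rule mult_add_less_mult[OF i j])
  have UC: "adj (id_kron k W) \<in> carrier_mat (k*n) (k*m)" using id_kron_carrier[OF W] by simp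
  have "(M * adj (id_kron k W)) $$ (x, i*m+j) = (\<Sum>r<k*n. M $$ (x, r) * adj (id_kron k W) $$ (r, i*m+j))"
    by (rule index_mult_mat_sum[OF M UC x y])
  also have "\<dots> = (\<Sum>a<k. \<Sum>q<n. M $$ (x, a*n+q) * adj (id_kron k W) $$ (a*n+q, i*m+j))"
    by (rule sum_lessThan_mult)
  also have "\<dots> = (\<Sum>a<k. \<Sum>q<n. if i = a then M $$ (x, a*n+q) * cnj (W $$ (j,q)) else 0)"
  proof (intro sum.cong refl)
    fix a q assume a: "a \<in> {..<k}" and q: "q \<in> {..<n}"
    have aq: "a*n+q < k*n" using a q mult_add_less_mult by auto
    have "adj (id_kron k W) $$ (a*n+q, i*m+j) = cnj (id_kron k W $$ (i*m+j, a*n+q))"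
      using aq y W by simp
    then show "M $$ (x, a*n+q) * adj (id_kron k W) $$ (a*n+q, i*m+j) = (if i = a then M $$ (x, a*n+q) * cnj (W $$ (j,q)) else 0)"
      using j q id_kron_index[OF W y aq] by auto
  qed
  also have "\<dots> = (\<Sum>a<k. if i = a then (\<Sum>q<n. M $$ (x, a*n+q) * cnj (W $$ (j,q))) else 0)"
    by (simp add: sum_if_const)
  also have "\<dots> = (\<Sum>q<n. M $$ (x, i*n+q) * cnj (W $$ (j,q)))" using i by (simp add: sum.delta)
  finally show ?thesis .
qed

lemma ptrace_first_id_kron_conj:
  assumes W: "W \<in> carrier_mat m n" and S: "S \<in> carrier_mat (k*n) (k*n)"
  shows "ptrace_first k m (id_kron k W * S * adj (id_kron k W)) = W * ptrace_first k n S * adj W"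
proof (rule eq_matI)
  have US: "id_kron k W * S \<in> carrier_mat (k*m) (k*n)" using id_kron_carrier[OF W, of k] S by simp
  have PC: "ptrace_first k n S \<in> carrier_mat n n" by (simp add: ptrace_first_def)
  fix j j' assume "j < dim_row (W * ptrace_first k n S * adj W)" "j' < dim_col (W * ptrace_first k n S * adj W)"
  then have j: "j < m" and j': "j' < m" using W by auto
  have "ptrace_first k m (id_kron k W * S * adj (id_kron k W)) $$ (j,j') =
      (\<Sum>i<k. (id_kron k W * S * adj (id_kron k W)) $$ (i*m+j, i*m+j'))"
    using j j' by (simp add: ptrace_first_def)
  also have "\<dots> = (\<Sum>i<k. \<Sum>q<n. (\<Sum>p<n. W $$ (j,p) * S $$ (i*n+p, i*n+q)) * cnj (W $$ (j',q)))"
  proof (intro sum.cong refl)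
    fix i assume i: "i \<in> {..<k}"
    show "(id_kron k W * S * adj (id_kron k W)) $$ (i*m+j, i*m+j') =
        (\<Sum>q<n. (\<Sum>p<n. W $$ (j,p) * S $$ (i*n+p, i*n+q)) * cnj (W $$ (j',q)))"
      using mult_adj_id_kron_index[OF W US mult_add_less_mult[of i k j m] _ j'] i j
        id_kron_mult_index[OF W S, of i j] mult_add_less_mult[of i k] by simp
  qed
  also have "\<dots> = (\<Sum>i<k. \<Sum>q<n. \<Sum>p<n. W $$ (j,p) * S $$ (i*n+p, i*n+q) * cnj (W $$ (j',q)))"
    by (simp add: sum_distrib_right)
  also have "\<dots> = (\<Sum>q<n. \<Sum>i<k. \<Sum>p<n. W $$ (j,p) * S $$ (i*n+p, i*n+q) * cnj (W $$ (j',q)))"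
    by (rule sum.swap)
  also have "\<dots> = (\<Sum>q<n. \<Sum>p<n. \<Sum>i<k. W $$ (j,p) * S $$ (i*n+p, i*n+q) * cnj (W $$ (j',q)))"
    by (rule sum.cong[OF refl]) (rule sum.swap)
  also have "\<dots> = (\<Sum>q<n. \<Sum>p<n. W $$ (j,p) * (\<Sum>i<k. S $$ (i*n+p, i*n+q)) * cnj (W $$ (j',q)))"
    by (simp add: sum_distrib_left sum_distrib_right)
  also have "\<dots> = (W * ptrace_first k n S * adj W) $$ (j,j')"
  proof -
    have WP: "W * ptrace_first k n S \<in> carrier_mat m n" using W PC by simp
    have "(W * ptrace_first k n S * adj W) $$ (j,j') = (\<Sum>q<n. (W * ptrace_first k n S) $$ (j,q) * adj W $$ (q,j'))"
      by (rule index_mult_mat_sum[OF WP adj_carrier[OF W] j j'])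
    also have "\<dots> = (\<Sum>q<n. (\<Sum>p<n. W $$ (j,p) * ptrace_first k n S $$ (p,q)) * cnj (W $$ (j',q)))"
      using W j j' by (intro sum.cong refl) (simp add: index_mult_mat_sum[OF W PC])
    also have "\<dots> = (\<Sum>q<n. \<Sum>p<n. W $$ (j,p) * (\<Sum>i<k. S $$ (i*n+p, i*n+q)) * cnj (W $$ (j',q)))"
      by (intro sum.cong refl) (simp add: ptrace_first_def sum_distrib_right)
    finally show ?thesis by simp
  qed
  finally show "ptrace_first k m (id_kron k W * S * adj (id_kron k W)) $$ (j,j') = (W * ptrace_first k n S * adj W) $$ (j,j')" .
qed (use W in \<open>simp_all add: ptrace_first_def\<close>)

lemma id_kron_isometry:
  assumes W: "W \<in> carrier_mat m n" and WW: "adj W * W = 1\<^sub>m n"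
  shows "adj (id_kron k W) * id_kron k W = 1\<^sub>m (k*n)"
proof (rule eq_matI)
  fix r s assume "r < dim_row (1\<^sub>m (k*n) :: complex mat)" "s < dim_col (1\<^sub>m (k*n) :: complex mat)"
  then have r: "r < k*n" and s: "s < k*n" by auto
  have n0: "n > 0" using r by (cases n) auto
  have rd: "r div n < k" and sd: "s div n < k" using r s by (auto simp: less_mult_imp_div_less)
  have rm: "r mod n < n" and sm: "s mod n < n" using n0 by auto
  have UC: "id_kron k W \<in> carrier_mat (k*m) (k*n)" by (rule id_kron_carrier[OF W])
  have "(adj (id_kron k W) * id_kron k W) $$ (r,s) = (\<Sum>x<k*m. adj (id_kron k W) $$ (r,x) * id_kron k W $$ (x,s))"
    by (rule index_mult_mat_sum[OF adj_carrier[OF UC] UC r s])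
  also have "\<dots> = (\<Sum>i<k. \<Sum>j<m. adj (id_kron k W) $$ (r,i*m+j) * id_kron k W $$ (i*m+j,s))"
    by (rule sum_lessThan_mult)
  also have "\<dots> = (\<Sum>i<k. if i = r div n then (\<Sum>j<m. cnj (W $$ (j, r mod n)) * (if i = s div n then W $$ (j, s mod n) else 0)) else 0)"
    unfolding sum_if_const[symmetric]
  proof (intro sum.cong refl)
    fix i j assume i: "i \<in> {..<k}" and j: "j \<in> {..<m}"
    have x: "i*m+j < k*m" using i j mult_add_less_mult by auto
    show "adj (id_kron k W) $$ (r,i*m+j) * id_kron k W $$ (i*m+j,s) =
      (if i = r div n then cnj (W $$ (j, r mod n)) * (if i = s div n then W $$ (j, s mod n) else 0) else 0)"
      using x r s W UC id_kron_index[OF W x r] id_kron_index[OF W x s] j by auto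
  qed
  also have "\<dots> = (\<Sum>j<m. cnj (W $$ (j, r mod n)) * (if r div n = s div n then W $$ (j, s mod n) else 0))"
    using rd by (simp add: sum.delta)
  also have "\<dots> = (if r div n = s div n then (adj W * W) $$ (r mod n, s mod n) else 0)"
    using W rm sm by (simp add: row_col_sum[OF adj_carrier[OF W] W])
  also have "\<dots> = (if r = s then 1 else 0)"
  proof -
    have eq: "(r div n = s div n \<and> r mod n = s mod n) = (r = s)" by (metis div_mult_mod_eq)
    show ?thesis using WW rm sm eq by auto
  qed
  also have "\<dots> = (1\<^sub>m (k*n) :: complex mat) $$ (r,s)" using r s by simp
  finally show "(adj (id_kron k W) * id_kron k W) $$ (r,s) = (1\<^sub>m (k*n) :: complex mat) $$ (r,s)" .
qed (use W in \<open>simp_all add: id_kron_def\<close>)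

lemma R_eps_id_kron_conj:
  assumes W: "W \<in> carrier_mat m n" and WW: "adj W * W = 1\<^sub>m n"
    and S: "S \<in> carrier_mat (k*n) (k*n)"
  shows "R_eps k m \<epsilon> (id_kron k W * S * adj (id_kron k W)) = R_eps k n \<epsilon> S"
proof -
  interpret w: isometry W m n using W WW by unfold_locales
  interpret u: isometry "id_kron k W" "k*m" "k*n"
    using id_kron_carrier[OF W] id_kron_isometry[OF W WW] by unfold_locales
  let ?S' = "id_kron k W * S * adj (id_kron k W)"
  define rB where "rB = ptrace_first k n S"
  define r2 where "r2 = ptrace_first k n (S * S)"
  have rBC: "rB \<in> carrier_mat n n" and r2C: "r2 \<in> carrier_mat n n"
    by (auto simp: rB_def r2_def ptrace_first_def)
  have rB': "ptrace_first k m ?S' = W * rB * adj W"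
    unfolding rB_def by (rule ptrace_first_id_kron_conj[OF W S])
  have "?S' * ?S' = id_kron k W * (S * S) * adj (id_kron k W)" by (rule u.conj_mult_conj[OF S S])
  then have r2': "ptrace_first k m (?S' * ?S') = W * r2 * adj W"
    unfolding r2_def using ptrace_first_id_kron_conj[OF W, of "S * S"] S by simp
  have "tr (nonpos_proj (W * r2 * adj W - c \<cdot>\<^sub>m ((W * rB * adj W) * (W * rB * adj W))) * (W * rB * adj W))
      = tr (nonpos_proj (r2 - c \<cdot>\<^sub>m (rB * rB)) * rB)" for c
    using w.conj_mult_conj[OF rBC rBC] w.conj_minus_smult_conj[OF r2C, of "rB * rB"]
      w.tr_nonpos_proj_conj[of "r2 - c \<cdot>\<^sub>m (rB * rB)" rB] r2C rBC by simp
  then show ?thesis unfolding R_eps_def Let_def rB' r2' rB_def[symmetric] r2_def[symmetric] by simp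
qed

section \<open>Factorization of positive semidefinite matrices\<close>

definition quad_form :: "nat \<Rightarrow> complex mat \<Rightarrow> (nat \<Rightarrow> complex) \<Rightarrow> complex" where
  "quad_form N J f = (\<Sum>i<N. \<Sum>l<N. cnj (f i) * J $$ (i,l) * f l)"

lemma quad_form_psd:
  assumes "psd N J"
  shows "0 \<le> Re (quad_form N J f)"
proof -
  have J: "J \<in> carrier_mat N N" using assms by (simp add: psd_def)
  let ?v = "vec N f"
  have v: "?v \<in> carrier_vec N" by simp
  have "conjugate ?v \<bullet> (J *\<^sub>v ?v) = (\<Sum>i<N. cnj (f i) * (\<Sum>l<N. J $$ (i,l) * f l))"
    using J by (simp add: cscalar_prod_sum[of _ N] row_vec_sum[of _ N N])
  also have "\<dots> = quad_form N J f" by (simp add: quad_form_def sum_distrib_left mult.assoc)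
  moreover have "0 \<le> Re (conjugate ?v \<bullet> (J *\<^sub>v ?v))" using assms v unfolding psd_def by blast
  ultimately show ?thesis by simp
qed

lemma quad_form_shift:
  assumes k: "k < N"
  shows "quad_form N J (\<lambda>i. f i - (if i = k then t else 0)) =
    quad_form N J f - t * (\<Sum>i<N. cnj (f i) * J $$ (i,k)) - cnj t * (\<Sum>l<N. J $$ (k,l) * f l) + cnj t * t * J $$ (k,k)"
proof -
  have e: "\<And>i l. cnj (f i - (if i = k then t else 0)) * J $$ (i,l) * (f l - (if l = k then t else 0)) =
     cnj (f i) * J $$ (i,l) * f l - (if l = k then t * (cnj (f i) * J $$ (i,k)) else 0)
     - (if i = k then cnj t * (J $$ (k,l) * f l) else 0) + (if i = k then (if l = k then cnj t * t * J $$ (k,k) else 0) else 0)"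
    by (auto simp: algebra_simps)
  have "quad_form N J (\<lambda>i. f i - (if i = k then t else 0)) =
     (\<Sum>i<N. (\<Sum>l<N. cnj (f i) * J $$ (i,l) * f l) - t * (cnj (f i) * J $$ (i,k))
        - (if i = k then cnj t * (\<Sum>l<N. J $$ (k,l) * f l) else 0) + (if i = k then cnj t * t * J $$ (k,k) else 0))"
    unfolding quad_form_def e using k
    by (intro sum.cong refl, simp only: sum.distrib sum_subtractf) (simp add: sum_if_const sum.delta sum_distrib_left)
  also have "\<dots> = quad_form N J f - t * (\<Sum>i<N. cnj (f i) * J $$ (i,k)) - cnj t * (\<Sum>l<N. J $$ (k,l) * f l) + cnj t * t * J $$ (k,k)"
    using k by (simp add: quad_form_def sum.distrib sum_subtractf sum_distrib_left sum.delta)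
  finally show ?thesis .
qed

lemma cscalar_mult_vec_quad_form:
  assumes J: "J \<in> carrier_mat N N" and v: "v \<in> carrier_vec N"
  shows "conjugate v \<bullet> (J *\<^sub>v v) = quad_form N J (\<lambda>i. v $ i)"
  unfolding quad_form_def using J v
  by (auto simp: cscalar_prod_sum[of _ N] row_vec_sum[of _ N N] sum_distrib_left mult.assoc intro!: sum.cong)

lemma psd_diag_real_nonneg:
  assumes "psd N J" "k < N"
  shows "J $$ (k,k) = complex_of_real (Re (J $$ (k,k)))" "0 \<le> Re (J $$ (k,k))"
proof -
  have "cnj (J $$ (k,k)) = J $$ (k,k)" using psd_hermitian_index[OF assms(1) assms(2) assms(2)] .
  then have "Im (J $$ (k,k)) = 0" by (metis cnj.simps(2) neg_equal_zero)
  then show "J $$ (k,k) = complex_of_real (Re (J $$ (k,k)))" by (simp add: complex_eq_iff)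
  have "quad_form N J (\<lambda>i. 0 - (if i = k then -1 else 0)) = J $$ (k,k)"
    using quad_form_shift[OF assms(2), of J "\<lambda>i. 0" "-1"] by (simp add: quad_form_def)
  then show "0 \<le> Re (J $$ (k,k))" using quad_form_psd[OF assms(1)] by metis
qed

lemma psd_zero_diag_row:
  assumes J: "psd N J" and k: "k < N" and a: "J $$ (k,k) = 0" and j: "j < N"
  shows "J $$ (k,j) = 0"
proof (rule ccontr)
  assume nz: "J $$ (k,j) \<noteq> 0"
  then have jk: "j \<noteq> k" using a by auto
  define b where "b = J $$ (j,k)"
  have bk: "J $$ (k,j) = cnj b" using psd_hermitian_index[OF J k j] by (simp add: b_def)
  have b0: "b \<noteq> 0" using nz bk by auto
  define nb where "nb = Re (cnj b * b)"
  have "Re b \<noteq> 0 \<or> Im b \<noteq> 0" using b0 complex_eq_iff by auto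
  then have nbp: "nb > 0" unfolding nb_def using sum_power2_gt_zero_iff[of "Re b" "Im b"]
    by (simp add: power2_eq_square)
  define r where "r = (Re (J $$ (j,j)) + 1) / (2 * nb)"
  define t where "t = complex_of_real r * cnj b"
  let ?f = "\<lambda>i. if i = j then (1::complex) else 0"
  have delta: "(if i = j then (1::complex) else 0) * x = (if i = j then x else 0)"
    "x * (if i = j then (1::complex) else 0) = (if i = j then x else 0)"
    "cnj (if i = j then (1::complex) else 0) = (if i = j then 1 else 0)" for x i
    by simp_all
  have "quad_form N J (\<lambda>i. ?f i - (if i = k then t else 0)) =
      quad_form N J ?f - t * (\<Sum>i<N. cnj (?f i) * J $$ (i,k)) - cnj t * (\<Sum>l<N. J $$ (k,l) * ?f l) + cnj t * t * J $$ (k,k)"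
    by (rule quad_form_shift[OF k])
  also have "\<dots> = J $$ (j,j) - t * b - cnj t * cnj b"
    using j a bk by (simp add: quad_form_def b_def delta sum.delta)
  also have "\<dots> = J $$ (j,j) - complex_of_real (2 * r * nb)"
  proof -
    have cb: "cnj b * b = complex_of_real nb" unfolding nb_def by (simp add: complex_eq_iff)
    have "t * b + cnj t * cnj b = 2 * complex_of_real r * (cnj b * b)" by (simp add: t_def algebra_simps)
    then have "t * b + cnj t * cnj b = complex_of_real (2 * r * nb)" using cb by simp
    then show ?thesis by (simp add: algebra_simps)
  qed
  finally have "Re (quad_form N J (\<lambda>i. ?f i - (if i = k then t else 0))) = Re (J $$ (j,j)) - 2 * r * nb"
    by simp
  also have "\<dots> = -1" using nbp by (simp add: r_def field_simps)
  finally show False using quad_form_psd[OF J, of "\<lambda>i. ?f i - (if i = k then t else 0)"] by simp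
qed

definition schur_compl :: "nat \<Rightarrow> complex mat \<Rightarrow> nat \<Rightarrow> complex mat" where
  "schur_compl N J k = mat N N (\<lambda>(i,j). J $$ (i,j) - J $$ (i,k) * J $$ (k,j) / J $$ (k,k))"

text \<open>Completing the square in the k-th coordinate.\<close>

lemma quad_form_schur_compl:
  fixes f :: "nat \<Rightarrow> complex"
  assumes J: "psd N J" and k: "k < N" and a: "J $$ (k,k) \<noteq> 0"
  defines "s \<equiv> (\<Sum>l<N. J $$ (k,l) * f l)"
  shows "quad_form N (schur_compl N J k) f = quad_form N J (\<lambda>i. f i - (if i = k then s / J $$ (k,k) else 0))"
proof -
  let ?a = "J $$ (k,k)"
  have ca: "cnj ?a = ?a" using psd_hermitian_index[OF J k k] .
  have A: "(\<Sum>i<N. cnj (f i) * J $$ (i,k)) = cnj s"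
    unfolding s_def cnj_sum using psd_hermitian_index[OF J _ k] by (intro sum.cong refl) (simp add: mult.commute)
  have "quad_form N (schur_compl N J k) f =
      (\<Sum>i<N. \<Sum>l<N. cnj (f i) * J $$ (i,l) * f l - (cnj (f i) * J $$ (i,k)) * (J $$ (k,l) * f l) / ?a)"
    unfolding quad_form_def by (intro sum.cong refl) (simp add: schur_compl_def algebra_simps)
  also have "\<dots> = quad_form N J f - (\<Sum>i<N. cnj (f i) * J $$ (i,k)) * (\<Sum>l<N. J $$ (k,l) * f l) / ?a"
    by (simp only: sum_subtractf quad_form_def sum_product sum_divide_distrib)
  also have "\<dots> = quad_form N J f - cnj s * s / ?a" using A by (simp add: s_def)
  also have "\<dots> = quad_form N J (\<lambda>i. f i - (if i = k then s / ?a else 0))"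
  proof -
    have e: "quad_form N J (\<lambda>i. f i - (if i = k then s / ?a else 0)) =
        quad_form N J f - s / ?a * cnj s - cnj (s / ?a) * s + cnj (s / ?a) * (s / ?a) * ?a"
      using quad_form_shift[OF k, of J f "s / ?a"] unfolding A s_def[symmetric] .
    have "cnj (s / ?a) * (s / ?a) * ?a = cnj s * s / ?a" using a ca by (simp add: field_simps)
    then show ?thesis unfolding e using ca by (simp add: field_simps)
  qed
  finally show ?thesis .
qed

lemma psd_schur_compl:
  assumes J: "psd N J" and k: "k < N" and a: "J $$ (k,k) \<noteq> 0"
  shows "psd N (schur_compl N J k)"
proof -
  have ca: "cnj (J $$ (k,k)) = J $$ (k,k)" using psd_hermitian_index[OF J k k] .
  have "adj (schur_compl N J k) = schur_compl N J k"
    using psd_hermitian_index[OF J] k ca by (auto intro!: eq_matI simp: schur_compl_def mult.commute)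
  moreover have "0 \<le> Re (conjugate v \<bullet> (schur_compl N J k *\<^sub>v v))" if v: "v \<in> carrier_vec N" for v
    using cscalar_mult_vec_quad_form[OF _ v, of "schur_compl N J k"] quad_form_schur_compl[OF J k a]
      quad_form_psd[OF J] by (simp add: schur_compl_def)
  ultimately show ?thesis by (simp add: psd_def hermitian_def schur_compl_def)
qed

lemma schur_compl_vanishing:
  assumes k: "k < N" and a: "J $$ (k,k) \<noteq> 0"
    and Z: "\<And>i j. i < N \<Longrightarrow> j < N \<Longrightarrow> i < k \<or> j < k \<Longrightarrow> J $$ (i,j) = 0"
    and ij: "i < N" "j < N" "i < Suc k \<or> j < Suc k"
  shows "schur_compl N J k $$ (i,j) = 0"
proof (cases "i < k \<or> j < k")
  case True
  then show ?thesis using ij Z[OF ij(1,2)] Z[OF ij(1) k] Z[OF k ij(2)] by (auto simp: schur_compl_def)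
next
  case False
  then have "i = k \<or> j = k" using ij by auto
  then show ?thesis using ij a by (auto simp: schur_compl_def)
qed

text \<open>One step of the Cholesky factorization: a factor of the Schur complement becomes a factor of
  the matrix after adjoining the k-th column divided by the square root of the pivot.\<close>

lemma psd_factor_from_schur_compl:
  assumes J: "psd N J" and k: "k < N" and a: "J $$ (k,k) \<noteq> 0"
    and M': "M' \<in> carrier_mat N e" "schur_compl N J k = M' * adj M'"
  shows "\<exists>M. M \<in> carrier_mat N (Suc e) \<and> J = M * adj M"
proof -
  let ?a = "J $$ (k,k)"
  have ar: "?a = complex_of_real (Re ?a)" and ap: "0 \<le> Re ?a" using psd_diag_real_nonneg[OF J k] by auto
  define sq where "sq = complex_of_real (sqrt (Re ?a))"
  have "sq * sq = complex_of_real (Re ?a)" unfolding sq_def using ap by (simp flip: of_real_mult)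
  then have sqsq: "sq * sq = ?a" using ar by simp
  have csq: "cnj sq = sq" by (simp add: sq_def)
  define M where "M = mat N (Suc e) (\<lambda>(i,l). if l < e then M' $$ (i,l) else J $$ (i,k) / sq)"
  have MC: "M \<in> carrier_mat N (Suc e)" by (simp add: M_def)
  have "J = M * adj M"
  proof (rule eq_matI)
    fix i j assume "i < dim_row (M * adj M)" "j < dim_col (M * adj M)"
    then have ij: "i < N" "j < N" using MC by auto
    have "(M * adj M) $$ (i,j) = (\<Sum>l<Suc e. M $$ (i,l) * adj M $$ (l,j))"
      by (rule index_mult_mat_sum[OF MC adj_carrier[OF MC] ij])
    also have "\<dots> = (\<Sum>l<e. M' $$ (i,l) * cnj (M' $$ (j,l))) + J $$ (i,k) / sq * cnj (J $$ (j,k) / sq)"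
      using ij MC by (simp add: M_def)
    also have "(\<Sum>l<e. M' $$ (i,l) * cnj (M' $$ (j,l))) = schur_compl N J k $$ (i,j)"
      using M' ij by (simp add: row_col_sum[OF M'(1) adj_carrier[OF M'(1)]])
    also have "J $$ (i,k) / sq * cnj (J $$ (j,k) / sq) = J $$ (i,k) * J $$ (k,j) / ?a"
      using psd_hermitian_index[OF J k ij(2)] csq sqsq by (simp add: field_simps)
    finally show "J $$ (i,j) = (M * adj M) $$ (i,j)" using ij by (simp add: schur_compl_def)
  qed (use MC psd_carrier[OF J] in auto)
  then show ?thesis using MC by blast
qed

lemma psd_factorization_aux:
  "psd N J \<Longrightarrow> (\<forall>i j. i < N \<longrightarrow> j < N \<longrightarrow> (i < k \<or> j < k) \<longrightarrow> J $$ (i,j) = 0) \<Longrightarrow>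
    \<exists>e M. M \<in> carrier_mat N e \<and> J = M * adj M"
proof (induct "N - k" arbitrary: k J)
  case 0
  then have "J = 0\<^sub>m N 0 * adj (0\<^sub>m N 0)"
    by (intro eq_matI) (auto simp: scalar_prod_def dest: psd_carrier)
  then show ?case by (metis zero_carrier_mat)
next
  case (Suc d)
  have k: "k < N" and d: "d = N - Suc k" using Suc(2) by auto
  have J: "psd N J" using Suc(3) .
  have Z: "\<And>i j. i < N \<Longrightarrow> j < N \<Longrightarrow> i < k \<or> j < k \<Longrightarrow> J $$ (i,j) = 0"
    using Suc(4) by blast
  show ?case
  proof (cases "J $$ (k,k) = 0")
    case True
    have "J $$ (k,j) = 0" "J $$ (j,k) = 0" if "j < N" for j
      using psd_zero_diag_row[OF J k True that] psd_hermitian_index[OF J that k] by (metis complex_cnj_zero)+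
    then have "\<forall>i j. i < N \<longrightarrow> j < N \<longrightarrow> (i < Suc k \<or> j < Suc k) \<longrightarrow> J $$ (i,j) = 0"
      using Z by (metis less_Suc_eq)
    then show ?thesis using Suc(1)[OF d J] by blast
  next
    case False
    obtain e M' where "M' \<in> carrier_mat N e" "schur_compl N J k = M' * adj M'"
      using Suc(1)[OF d psd_schur_compl[OF J k False]] schur_compl_vanishing[OF k False Z] by blast
    then show ?thesis using psd_factor_from_schur_compl[OF J k False] by blast
  qed
qed

lemma psd_factorization: "psd N J \<Longrightarrow> \<exists>e M. M \<in> carrier_mat N e \<and> J = M * adj M"
  using psd_factorization_aux[of N J 0] by simp

section \<open>Stinespring dilation of a channel\<close>

lemma index_conj_sum:
  assumes A: "A \<in> carrier_mat a c" and X: "X \<in> carrier_mat c c" and x: "x < a" and y: "y < a"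
  shows "(A * X * adj A) $$ (x,y) = (\<Sum>i<c. \<Sum>j<c. A $$ (x,i) * X $$ (i,j) * cnj (A $$ (y,j)))"
proof -
  have AX: "A * X \<in> carrier_mat a c" using A X by simp
  have "(A * X * adj A) $$ (x,y) = (\<Sum>j<c. (A * X) $$ (x,j) * adj A $$ (j,y))"
    by (rule index_mult_mat_sum[OF AX adj_carrier[OF A] x y])
  also have "\<dots> = (\<Sum>j<c. (\<Sum>i<c. A $$ (x,i) * X $$ (i,j)) * cnj (A $$ (y,j)))"
    using A X x y by (intro sum.cong refl) (simp add: row_col_sum[OF A X])
  also have "\<dots> = (\<Sum>i<c. \<Sum>j<c. A $$ (x,i) * X $$ (i,j) * cnj (A $$ (y,j)))"
    by (simp add: sum_distrib_right) (rule sum.swap)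
  finally show ?thesis .
qed

definition mat_unit :: "nat \<Rightarrow> nat \<Rightarrow> nat \<Rightarrow> complex mat" where
  "mat_unit b i j = mat b b (\<lambda>(k,l). if k = i \<and> l = j then 1 else 0)"

lemma cptp_index_expansion:
  assumes F: "cptp b b' F" and X: "X \<in> carrier_mat b b" and p: "p < b'" and q: "q < b'"
  shows "F X $$ (p,q) = (\<Sum>i<b. \<Sum>j<b. X $$ (i,j) * F (mat_unit b i j) $$ (p,q))"
proof -
  have FC: "\<And>Y. Y \<in> carrier_mat b b \<Longrightarrow> F Y \<in> carrier_mat b' b'"
    and Fadd: "\<And>Y Z. Y \<in> carrier_mat b b \<Longrightarrow> Z \<in> carrier_mat b b \<Longrightarrow> F (Y + Z) = F Y + F Z"
    and Fsm: "\<And>Y c. Y \<in> carrier_mat b b \<Longrightarrow> F (c \<cdot>\<^sub>m Y) = c \<cdot>\<^sub>m F Y"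
    using F by (simp_all add: cptp_def)
  define XT where "XT T = mat b b (\<lambda>(k,l). if (k,l) \<in> T then X $$ (k,l) else 0)" for T
  have XTC: "\<And>T. XT T \<in> carrier_mat b b" by (simp add: XT_def)
  have EC: "\<And>i j. mat_unit b i j \<in> carrier_mat b b" by (simp add: mat_unit_def)
  have restrict: "finite T \<Longrightarrow> T \<subseteq> {..<b} \<times> {..<b} \<Longrightarrow>
      F (XT T) $$ (p,q) = (\<Sum>(i,j)\<in>T. X $$ (i,j) * F (mat_unit b i j) $$ (p,q))" for T
  proof (induct T rule: finite_induct)
    case empty
    have "XT {} = 0 \<cdot>\<^sub>m XT {}" by (rule eq_matI) (auto simp: XT_def)
    then have "F (XT {}) = 0 \<cdot>\<^sub>m F (XT {})" using Fsm[OF XTC] by metis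
    then have "F (XT {}) $$ (p,q) = 0 * F (XT {}) $$ (p,q)" using FC[OF XTC] p q
      by (metis carrier_matD index_smult_mat(1))
    then show ?case by simp
  next
    case (insert x U)
    obtain i j where x: "x = (i,j)" and ij: "i < b" "j < b" using insert(4) by auto
    have "XT (insert x U) = XT U + X $$ (i,j) \<cdot>\<^sub>m mat_unit b i j"
      using insert(2) x ij by (intro eq_matI) (auto simp: XT_def mat_unit_def)
    then have "F (XT (insert x U)) = F (XT U) + X $$ (i,j) \<cdot>\<^sub>m F (mat_unit b i j)"
      using Fadd[OF XTC smult_carrier_mat[OF EC]] Fsm[OF EC] by simp
    moreover have "F (XT U) \<in> carrier_mat b' b'" "F (mat_unit b i j) \<in> carrier_mat b' b'"
      using FC[OF XTC] FC[OF EC] by blast+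
    ultimately show ?case using insert x p q by simp
  qed
  have "XT ({..<b} \<times> {..<b}) = X" using X by (intro eq_matI) (auto simp: XT_def)
  then have "F X $$ (p,q) = (\<Sum>(i,j)\<in>{..<b} \<times> {..<b}. X $$ (i,j) * F (mat_unit b i j) $$ (p,q))"
    using restrict[of "{..<b} \<times> {..<b}"] by simp
  then show ?thesis by (simp add: sum.cartesian_product)
qed


text \<open>The unnormalized projection onto the maximally entangled vector of two copies of a
  b-dimensional system; its image under id (x) F is the Choi matrix of F.\<close>

definition max_ent_mat :: "nat \<Rightarrow> complex mat" where
  "max_ent_mat b = mat (b*b) (b*b) (\<lambda>(r,s). if r mod b = r div b \<and> s mod b = s div b then 1 else 0)"

definition choi_mat :: "nat \<Rightarrow> nat \<Rightarrow> (complex mat \<Rightarrow> complex mat) \<Rightarrow> complex mat" where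
  "choi_mat b b' F = id_tensor b b b' F (max_ent_mat b)"

lemma psd_max_ent_mat: "psd (b*b) (max_ent_mat b)"
proof -
  define v where "v = mat (b*b) 1 (\<lambda>(r,l). if r mod b = r div b then (1::complex) else 0)"
  have vC: "v \<in> carrier_mat (b*b) 1" by (simp add: v_def)
  have "max_ent_mat b = v * adj v"
  proof (rule eq_matI)
    fix r s assume "r < dim_row (v * adj v)" "s < dim_col (v * adj v)"
    then have rs: "r < b*b" "s < b*b" using vC by auto
    have "(v * adj v) $$ (r,s) = v $$ (r,0) * cnj (v $$ (s,0))"
      using index_mult_mat_sum[OF vC adj_carrier[OF vC] rs] rs vC by simp
    then show "max_ent_mat b $$ (r,s) = (v * adj v) $$ (r,s)"
      using rs by (simp add: v_def max_ent_mat_def)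
  qed (use vC in \<open>auto simp: max_ent_mat_def\<close>)
  then show ?thesis using psd_mult_adj[OF vC] by simp
qed

lemma psd_choi_mat: "cptp b b' F \<Longrightarrow> psd (b*b') (choi_mat b b' F)"
  using psd_max_ent_mat by (simp add: cptp_def choi_mat_def)

lemma choi_mat_index:
  assumes ij: "i < b" "j < b" and pq: "p < b'" "q < b'"
  shows "choi_mat b b' F $$ (i*b'+p, j*b'+q) = F (mat_unit b i j) $$ (p,q)"
proof -
  have "mat b b (\<lambda>(k,l). max_ent_mat b $$ (i*b + k, j*b + l)) = mat_unit b i j"
    using ij mult_add_less_mult[OF ij(1)] mult_add_less_mult[OF ij(2)]
    by (intro eq_matI) (auto simp: mat_unit_def max_ent_mat_def)
  then show ?thesis
    unfolding choi_mat_def id_tensor_def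
    using mult_add_less_mult[OF ij(1) pq(1)] mult_add_less_mult[OF ij(2) pq(2)] pq by simp
qed

text \<open>A factorization of the Choi matrix as M * adj M, with columns indexed by an environment E,
  is read as an operator V from B to B' (x) E.\<close>

definition choi_dilation :: "nat \<Rightarrow> nat \<Rightarrow> nat \<Rightarrow> complex mat \<Rightarrow> complex mat" where
  "choi_dilation b b' e M = mat (b'*e) b (\<lambda>(x,i). M $$ (i*b' + x div e, x mod e))"

lemma choi_dilation_carrier: "choi_dilation b b' e M \<in> carrier_mat (b'*e) b"
  by (simp add: choi_dilation_def)

lemma choi_dilation_index:
  "p < b' \<Longrightarrow> c < e \<Longrightarrow> i < b \<Longrightarrow> choi_dilation b b' e M $$ (p*e+c, i) = M $$ (i*b'+p, c)"
  using mult_add_less_mult by (simp add: choi_dilation_def)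

locale choi_factorization =
  fixes b b' e :: nat and F :: "complex mat \<Rightarrow> complex mat" and M :: "complex mat"
  assumes cptp: "cptp b b' F"
    and M_carrier: "M \<in> carrier_mat (b*b') e" and choi_eq: "choi_mat b b' F = M * adj M"
begin

abbreviation V :: "complex mat" where "V \<equiv> choi_dilation b b' e M"

lemma unit_image_index:
  assumes "i < b" "j < b" "p < b'" "q < b'"
  shows "F (mat_unit b i j) $$ (p,q) = (\<Sum>c<e. M $$ (i*b'+p, c) * cnj (M $$ (j*b'+q, c)))"
proof -
  have rs: "i*b'+p < b*b'" "j*b'+q < b*b'" using assms mult_add_less_mult by auto
  have "F (mat_unit b i j) $$ (p,q) = (M * adj M) $$ (i*b'+p, j*b'+q)"
    using choi_mat_index[OF assms, of F] choi_eq by simp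
  also have "\<dots> = (\<Sum>c<e. M $$ (i*b'+p, c) * adj M $$ (c, j*b'+q))"
    by (rule index_mult_mat_sum[OF M_carrier adj_carrier[OF M_carrier] rs])
  finally show ?thesis using rs M_carrier by simp
qed

lemma dilation_isometry: "adj V * V = 1\<^sub>m b"
proof (rule eq_matI)
  have VC: "V \<in> carrier_mat (b'*e) b" by (rule choi_dilation_carrier)
  have FC: "F (mat_unit b i j) \<in> carrier_mat b' b'" for i j
    using cptp by (simp add: cptp_def mat_unit_def)
  fix i j assume "i < dim_row (1\<^sub>m b :: complex mat)" "j < dim_col (1\<^sub>m b :: complex mat)"
  then have ij: "i < b" "j < b" by auto
  have "(adj V * V) $$ (i,j) = (\<Sum>x<b'*e. adj V $$ (i,x) * V $$ (x,j))"
    by (rule index_mult_mat_sum[OF adj_carrier[OF VC] VC ij])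
  also have "\<dots> = (\<Sum>p<b'. \<Sum>c<e. adj V $$ (i,p*e+c) * V $$ (p*e+c,j))" by (rule sum_lessThan_mult)
  also have "\<dots> = (\<Sum>p<b'. cnj (\<Sum>c<e. M $$ (i*b'+p, c) * cnj (M $$ (j*b'+p, c))))"
    using ij VC mult_add_less_mult
    by (intro sum.cong refl) (auto simp: cnj_sum choi_dilation_index mult.commute)
  also have "\<dots> = cnj (tr (F (mat_unit b i j)))"
    using ij FC[of i j] by (simp add: unit_image_index tr_def cnj_sum)
  also have "\<dots> = cnj (tr (mat_unit b i j))"
    using cptp by (simp add: cptp_def mat_unit_def)
  also have "\<dots> = (1\<^sub>m b :: complex mat) $$ (i,j)"
    using ij by (cases "i = j") (auto simp: tr_def mat_unit_def sum.delta intro!: sum.neutral)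
  finally show "(adj V * V) $$ (i,j) = (1\<^sub>m b :: complex mat) $$ (i,j)" .
qed (simp_all add: choi_dilation_def)

lemma channel_eq_dilation:
  assumes X: "X \<in> carrier_mat b b"
  shows "F X = ptrace_last b' e (V * X * adj V)"
proof (rule eq_matI)
  fix p q assume "p < dim_row (ptrace_last b' e (V * X * adj V))" "q < dim_col (ptrace_last b' e (V * X * adj V))"
  then have pq: "p < b'" "q < b'" by (auto simp: ptrace_last_def)
  have "ptrace_last b' e (V * X * adj V) $$ (p,q) = (\<Sum>c<e. (V * X * adj V) $$ (p*e+c, q*e+c))"
    using pq by (simp add: ptrace_last_def)
  also have "\<dots> = (\<Sum>c<e. \<Sum>i<b. \<Sum>j<b. M $$ (i*b'+p, c) * X $$ (i,j) * cnj (M $$ (j*b'+q, c)))"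
    using pq mult_add_less_mult
    by (intro sum.cong refl) (simp add: index_conj_sum[OF choi_dilation_carrier X] choi_dilation_index)
  also have "\<dots> = (\<Sum>i<b. \<Sum>j<b. X $$ (i,j) * (\<Sum>c<e. M $$ (i*b'+p, c) * cnj (M $$ (j*b'+q, c))))"
    by (subst sum.swap, subst sum.swap) (simp add: sum_distrib_left mult_ac)
  also have "\<dots> = (\<Sum>i<b. \<Sum>j<b. X $$ (i,j) * F (mat_unit b i j) $$ (p,q))"
    using pq by (simp add: unit_image_index)
  also have "\<dots> = F X $$ (p,q)" using cptp_index_expansion[OF cptp X pq] by simp
  finally show "F X $$ (p,q) = ptrace_last b' e (V * X * adj V) $$ (p,q)" by simp
qed (use cptp X in \<open>auto simp: cptp_def ptrace_last_def\<close>)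

end

lemma stinespring_dilation:
  assumes F: "cptp b b' F"
  shows "\<exists>e V. V \<in> carrier_mat (b'*e) b \<and> adj V * V = 1\<^sub>m b \<and>
           (\<forall>X \<in> carrier_mat b b. F X = ptrace_last b' e (V * X * adj V))"
proof -
  obtain e M where "M \<in> carrier_mat (b*b') e" "choi_mat b b' F = M * adj M"
    using psd_factorization[OF psd_choi_mat[OF F]] by blast
  then interpret choi_factorization b b' e F M using F by unfold_locales
  show ?thesis using choi_dilation_carrier dilation_isometry channel_eq_dilation by blast
qed

section \<open>Extensions through the dilation\<close>

definition kron_id :: "complex mat \<Rightarrow> nat \<Rightarrow> complex mat" where
  "kron_id V c = mat (dim_row V * c) (dim_col V * c) (\<lambda>(x,r). if x mod c = r mod c then V $$ (x div c, r div c) else 0)"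

lemma kron_id_dims[simp]: "dim_row (kron_id V c) = dim_row V * c" "dim_col (kron_id V c) = dim_col V * c"
  by (auto simp: kron_id_def)

lemma kron_id_carrier: "V \<in> carrier_mat a b \<Longrightarrow> kron_id V c \<in> carrier_mat (a*c) (b*c)"
  by (auto simp: kron_id_def)

lemma kron_id_index:
  assumes V: "V \<in> carrier_mat a b" and y: "y < a" and z: "z < b" and c0: "c0 < c" and c1: "c1 < c"
  shows "kron_id V c $$ (y*c+c0, z*c+c1) = (if c0 = c1 then V $$ (y,z) else 0)"
  using assms mult_add_less_mult[OF y c0] mult_add_less_mult[OF z c1]
  by (simp add: kron_id_def)

lemma sum_kron_id_index:
  assumes V: "V \<in> carrier_mat a b" and y: "y < a" and c0: "c0 < c"
  shows "(\<Sum>s<b*c. kron_id V c $$ (y*c+c0, s) * f s) = (\<Sum>z<b. V $$ (y,z) * f (z*c+c0))"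
proof -
  have "(\<Sum>s<b*c. kron_id V c $$ (y*c+c0, s) * f s) = (\<Sum>z<b. \<Sum>c1<c. kron_id V c $$ (y*c+c0, z*c+c1) * f (z*c+c1))"
    by (rule sum_lessThan_mult)
  also have "\<dots> = (\<Sum>z<b. \<Sum>c1<c. if c0 = c1 then V $$ (y,z) * f (z*c+c1) else 0)"
    using kron_id_index[OF V y _ c0] by (intro sum.cong refl) auto
  also have "\<dots> = (\<Sum>z<b. V $$ (y,z) * f (z*c+c0))" using c0 by (simp add: sum.delta')
  finally show ?thesis .
qed

lemma kron_id_isometry:
  assumes V: "V \<in> carrier_mat a b" and VV: "adj V * V = 1\<^sub>m b"
  shows "adj (kron_id V c) * kron_id V c = 1\<^sub>m (b*c)"
proof (rule eq_matI)
  fix r s assume "r < dim_row (1\<^sub>m (b*c) :: complex mat)" "s < dim_col (1\<^sub>m (b*c) :: complex mat)"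
  then have r: "r < b*c" and s: "s < b*c" by auto
  have c0: "c > 0" using r by (cases c) auto
  have rd: "r div c < b" and sd: "s div c < b" using r s by (auto simp: less_mult_imp_div_less)
  have rm: "r mod c < c" and sm: "s mod c < c" using c0 by auto
  have WC: "kron_id V c \<in> carrier_mat (a*c) (b*c)" by (rule kron_id_carrier[OF V])
  have "(adj (kron_id V c) * kron_id V c) $$ (r,s) = (\<Sum>x<a*c. adj (kron_id V c) $$ (r,x) * kron_id V c $$ (x,s))"
    by (rule index_mult_mat_sum[OF adj_carrier[OF WC] WC r s])
  also have "\<dots> = (\<Sum>y<a. \<Sum>d<c. adj (kron_id V c) $$ (r,y*c+d) * kron_id V c $$ (y*c+d,s))"
    by (rule sum_lessThan_mult)
  also have "\<dots> = (\<Sum>y<a. \<Sum>d<c. if d = r mod c then cnj (V $$ (y, r div c)) * (if d = s mod c then V $$ (y, s div c) else 0) else 0)"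
  proof (intro sum.cong refl)
    fix y d assume y: "y \<in> {..<a}" and d: "d \<in> {..<c}"
    have x: "y*c+d < a*c" using y d mult_add_less_mult by auto
    have r': "r = (r div c) * c + r mod c" and s': "s = (s div c) * c + s mod c" by simp_all
    have e1: "kron_id V c $$ (y*c+d, r) = (if d = r mod c then V $$ (y, r div c) else 0)"
      using kron_id_index[OF V _ rd _ rm, of y d] y d r' by simp
    have e2: "kron_id V c $$ (y*c+d, s) = (if d = s mod c then V $$ (y, s div c) else 0)"
      using kron_id_index[OF V _ sd _ sm, of y d] y d s' by simp
    show "adj (kron_id V c) $$ (r,y*c+d) * kron_id V c $$ (y*c+d,s) =
      (if d = r mod c then cnj (V $$ (y, r div c)) * (if d = s mod c then V $$ (y, s div c) else 0) else 0)"
      using x r s V e1 e2 by auto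
  qed
  also have "\<dots> = (\<Sum>y<a. cnj (V $$ (y, r div c)) * (if r mod c = s mod c then V $$ (y, s div c) else 0))"
    using rm by (simp add: sum.delta)
  also have "\<dots> = (if r mod c = s mod c then (adj V * V) $$ (r div c, s div c) else 0)"
    using V rd sd by (simp add: row_col_sum[OF adj_carrier[OF V] V])
  also have "\<dots> = (if r = s then 1 else 0)"
  proof -
    have eq: "(r div c = s div c \<and> r mod c = s mod c) = (r = s)" by (metis div_mult_mod_eq)
    show ?thesis using VV rd sd eq by auto
  qed
  also have "\<dots> = (1\<^sub>m (b*c) :: complex mat) $$ (r,s)" using r s by simp
  finally show "(adj (kron_id V c) * kron_id V c) $$ (r,s) = (1\<^sub>m (b*c) :: complex mat) $$ (r,s)" .
qed (use V in \<open>simp_all add: kron_id_def\<close>)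

lemma id_kron_conj_index:
  assumes W: "W \<in> carrier_mat m n" and S: "S \<in> carrier_mat (k*n) (k*n)"
  and i: "i < k" and i': "i' < k" and j: "j < m" and j': "j' < m"
  shows "(id_kron k W * S * adj (id_kron k W)) $$ (i*m+j, i'*m+j') =
    (\<Sum>s<n. W $$ (j,s) * (\<Sum>t<n. S $$ (i*n+s, i'*n+t) * cnj (W $$ (j',t))))"
proof -
  have US: "id_kron k W * S \<in> carrier_mat (k*m) (k*n)" using id_kron_carrier[OF W, of k] S by simp
  have "(id_kron k W * S * adj (id_kron k W)) $$ (i*m+j, i'*m+j') = (\<Sum>t<n. (id_kron k W * S) $$ (i*m+j, i'*n+t) * cnj (W $$ (j',t)))"
    by (rule mult_adj_id_kron_index[OF W US mult_add_less_mult[OF i j] i' j'])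
  also have "\<dots> = (\<Sum>t<n. (\<Sum>s<n. W $$ (j,s) * S $$ (i*n+s, i'*n+t)) * cnj (W $$ (j',t)))"
    using mult_add_less_mult[OF i' _] by (intro sum.cong refl) (simp add: id_kron_mult_index[OF W S i j])
  also have "\<dots> = (\<Sum>s<n. W $$ (j,s) * (\<Sum>t<n. S $$ (i*n+s, i'*n+t) * cnj (W $$ (j',t))))"
    by (simp add: sum_distrib_right sum_distrib_left mult.assoc) (rule sum.swap)
  finally show ?thesis .
qed



lemma sum_cnj_kron_id_index:
  assumes V: "V \<in> carrier_mat a b" and y: "y < a" and c0: "c0 < c"
  shows "(\<Sum>s<b*c. f s * cnj (kron_id V c $$ (y*c+c0, s))) = (\<Sum>z<b. f (z*c+c0) * cnj (V $$ (y,z)))"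
proof -
  have "(\<Sum>s<b*c. f s * cnj (kron_id V c $$ (y*c+c0, s))) = (\<Sum>z<b. \<Sum>c1<c. f (z*c+c1) * cnj (kron_id V c $$ (y*c+c0, z*c+c1)))"
    by (rule sum_lessThan_mult)
  also have "\<dots> = (\<Sum>z<b. \<Sum>c1<c. if c0 = c1 then f (z*c+c1) * cnj (V $$ (y,z)) else 0)"
    using kron_id_index[OF V y _ c0] by (intro sum.cong refl) auto
  also have "\<dots> = (\<Sum>z<b. f (z*c+c0) * cnj (V $$ (y,z)))" using c0 by (simp add: sum.delta')
  finally show ?thesis .
qed

lemma id_kron_kron_id_conj_index:
  assumes V: "V \<in> carrier_mat (dB'*e) dB" and S: "S \<in> carrier_mat (dA*(dB*dC)) (dA*(dB*dC))"
    and a: "a < dA" "a' < dA" and pq: "p < dB'" "q < dB'" and f: "f < e" and c: "c < dC"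
  shows "(id_kron dA (kron_id V dC) * S * adj (id_kron dA (kron_id V dC)))
      $$ (a*(dB'*e*dC) + ((p*e+f)*dC+c), a'*(dB'*e*dC) + ((q*e+f)*dC+c))
    = (\<Sum>b<dB. V $$ (p*e+f, b) * (\<Sum>b'<dB. S $$ ((a*dB+b)*dC+c, (a'*dB+b')*dC+c) * cnj (V $$ (q*e+f, b'))))"
proof -
  let ?W = "kron_id V dC" and ?n = "dB*dC"
  have WC: "?W \<in> carrier_mat (dB'*e*dC) ?n" using kron_id_carrier[OF V] .
  have pf: "p*e+f < dB'*e" and qf: "q*e+f < dB'*e" using mult_add_less_mult pq f by auto
  have j: "(p*e+f)*dC+c < dB'*e*dC" "(q*e+f)*dC+c < dB'*e*dC" using mult_add_less_mult pf qf c by auto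
  have "(id_kron dA ?W * S * adj (id_kron dA ?W)) $$ (a*(dB'*e*dC) + ((p*e+f)*dC+c), a'*(dB'*e*dC) + ((q*e+f)*dC+c))
      = (\<Sum>s<?n. ?W $$ ((p*e+f)*dC+c, s) * (\<Sum>t<?n. S $$ (a*?n+s, a'*?n+t) * cnj (?W $$ ((q*e+f)*dC+c, t))))"
    by (rule id_kron_conj_index[OF WC _ a j]) (use S in \<open>simp add: mult.assoc\<close>)
  also have "\<dots> = (\<Sum>b<dB. V $$ (p*e+f, b) * (\<Sum>t<?n. S $$ (a*?n+(b*dC+c), a'*?n+t) * cnj (?W $$ ((q*e+f)*dC+c, t))))"
    using sum_kron_id_index[OF V pf, of c dC] c by simp
  also have "\<dots> = (\<Sum>b<dB. V $$ (p*e+f, b) * (\<Sum>b'<dB. S $$ (a*?n+(b*dC+c), a'*?n+(b'*dC+c)) * cnj (V $$ (q*e+f, b'))))"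
    using sum_cnj_kron_id_index[OF V qf, of c dC] c by simp
  also have "\<dots> = (\<Sum>b<dB. V $$ (p*e+f, b) * (\<Sum>b'<dB. S $$ ((a*dB+b)*dC+c, (a'*dB+b')*dC+c) * cnj (V $$ (q*e+f, b'))))"
    by (simp add: algebra_simps)
  finally show ?thesis .
qed

lemma sum_id_kron_kron_id_conj_index:
  assumes V: "V \<in> carrier_mat (dB'*e) dB" and S: "S \<in> carrier_mat (dA*(dB*dC)) (dA*(dB*dC))"
    and a: "a < dA" "a' < dA" and pq: "p < dB'" "q < dB'" and f: "f < e"
  defines "rA \<equiv> mat dB dB (\<lambda>(k,l). ptrace_last (dA*dB) dC S $$ (a*dB + k, a'*dB + l))"
  shows "(\<Sum>c<dC. (id_kron dA (kron_id V dC) * S * adj (id_kron dA (kron_id V dC)))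
      $$ (a*(dB'*e*dC) + ((p*e+f)*dC+c), a'*(dB'*e*dC) + ((q*e+f)*dC+c)))
    = (\<Sum>b<dB. \<Sum>b'<dB. V $$ (p*e+f, b) * rA $$ (b,b') * cnj (V $$ (q*e+f, b')))"
proof -
  have rA: "rA $$ (b,b') = (\<Sum>c<dC. S $$ ((a*dB+b)*dC + c, (a'*dB+b')*dC + c))"
    if "b < dB" "b' < dB" for b b'
    using that mult_add_less_mult a by (simp add: rA_def ptrace_last_def)
  have "(\<Sum>c<dC. (id_kron dA (kron_id V dC) * S * adj (id_kron dA (kron_id V dC)))
      $$ (a*(dB'*e*dC) + ((p*e+f)*dC+c), a'*(dB'*e*dC) + ((q*e+f)*dC+c)))
    = (\<Sum>c<dC. \<Sum>b<dB. \<Sum>b'<dB. V $$ (p*e+f, b) * S $$ ((a*dB+b)*dC+c, (a'*dB+b')*dC+c) * cnj (V $$ (q*e+f, b')))"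
    using id_kron_kron_id_conj_index[OF V S a pq f] by (simp add: sum_distrib_left mult.assoc)
  also have "\<dots> = (\<Sum>b<dB. \<Sum>b'<dB. \<Sum>c<dC. V $$ (p*e+f, b) * S $$ ((a*dB+b)*dC+c, (a'*dB+b')*dC+c) * cnj (V $$ (q*e+f, b')))"
    by (subst sum.swap) (simp add: sum.swap[of _ "{..<dC}"])
  also have "\<dots> = (\<Sum>b<dB. \<Sum>b'<dB. V $$ (p*e+f, b) * rA $$ (b,b') * cnj (V $$ (q*e+f, b')))"
    using rA by (intro sum.cong refl) (simp add: sum_distrib_left sum_distrib_right)
  finally show ?thesis .
qed

lemma ptrace_last_dilation_conj:
  assumes V: "V \<in> carrier_mat (dB'*e) dB"
    and st: "\<forall>X \<in> carrier_mat dB dB. F X = ptrace_last dB' e (V * X * adj V)"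
    and S: "S \<in> carrier_mat (dA*(dB*dC)) (dA*(dB*dC))"
  shows "ptrace_last (dA*dB') (e*dC) (id_kron dA (kron_id V dC) * S * adj (id_kron dA (kron_id V dC)))
     = id_tensor dA dB dB' F (ptrace_last (dA*dB) dC S)"
proof (rule eq_matI)
  let ?U = "id_kron dA (kron_id V dC)"
  let ?rho = "ptrace_last (dA*dB) dC S"
  fix x y assume "x < dim_row (id_tensor dA dB dB' F ?rho)" "y < dim_col (id_tensor dA dB dB' F ?rho)"
  then have x: "x < dA*dB'" and y: "y < dA*dB'" by (auto simp: id_tensor_def)
  have b0: "dB' > 0" using x by (cases dB') auto
  define a p a' q where "a = x div dB'" "p = x mod dB'" "a' = y div dB'" "q = y mod dB'"
  have ap: "a < dA" "p < dB'" "a' < dA" "q < dB'" "x = a*dB'+p" "y = a'*dB'+q"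
    using x y b0 by (auto simp: a_p_a'_q_def less_mult_imp_div_less)
  define rA where "rA = mat dB dB (\<lambda>(k,l). ?rho $$ (a*dB + k, a'*dB + l))"
  have rAC: "rA \<in> carrier_mat dB dB" by (simp add: rA_def)
  have idx: "x*(e*dC)+(f*dC+c) = a*(dB'*e*dC) + ((p*e+f)*dC+c)"
    "y*(e*dC)+(f*dC+c) = a'*(dB'*e*dC) + ((q*e+f)*dC+c)" for f c
    using ap by (simp_all add: algebra_simps)
  have "ptrace_last (dA*dB') (e*dC) (?U * S * adj ?U) $$ (x,y)
     = (\<Sum>f<e. \<Sum>c<dC. (?U * S * adj ?U) $$ (x*(e*dC)+(f*dC+c), y*(e*dC)+(f*dC+c)))"
    using x y sum_lessThan_mult by (simp add: ptrace_last_def)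
  also have "\<dots> = (\<Sum>f<e. \<Sum>b<dB. \<Sum>b'<dB. V $$ (p*e+f, b) * rA $$ (b,b') * cnj (V $$ (q*e+f, b')))"
    unfolding idx rA_def using sum_id_kron_kron_id_conj_index[OF V S ap(1,3) ap(2,4)] by simp
  also have "\<dots> = ptrace_last dB' e (V * rA * adj V) $$ (p,q)"
    using ap(1-4) mult_add_less_mult by (simp add: ptrace_last_def index_conj_sum[OF V rAC])
  also have "\<dots> = id_tensor dA dB dB' F ?rho $$ (x,y)"
    using st rAC x y by (simp add: rA_def a_p_a'_q_def id_tensor_def)
  finally show "ptrace_last (dA*dB') (e*dC) (?U * S * adj ?U) $$ (x,y) = id_tensor dA dB dB' F ?rho $$ (x,y)" .
qed (auto simp: id_tensor_def ptrace_last_def)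

lemma R_eps_extension_le_R_bar_channel:
  assumes F: "cptp dB dB' F"
    and \<sigma>: "density (dA * dB * dC) \<sigma>" and ext: "ptrace_last (dA * dB) dC \<sigma> = \<rho>"
  shows "R_eps dA (dB * dC) \<epsilon> \<sigma> \<le> R_bar dA dB' \<epsilon> (id_tensor dA dB dB' F \<rho>)"
proof -
  obtain e V where V: "V \<in> carrier_mat (dB'*e) dB" "adj V * V = 1\<^sub>m dB"
    and st: "\<forall>X \<in> carrier_mat dB dB. F X = ptrace_last dB' e (V * X * adj V)"
    using stinespring_dilation[OF F] by blast
  let ?W = "kron_id V dC"
  let ?U = "id_kron dA ?W"
  let ?\<sigma>' = "?U * \<sigma> * adj ?U"
  have WC: "?W \<in> carrier_mat (dB'*e*dC) (dB*dC)" and WW: "adj ?W * ?W = 1\<^sub>m (dB*dC)"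
    using kron_id_carrier[OF V(1)] kron_id_isometry[OF V] .
  have UC: "?U \<in> carrier_mat (dA*(dB'*e*dC)) (dA*(dB*dC))" and UU: "adj ?U * ?U = 1\<^sub>m (dA*(dB*dC))"
    using id_kron_carrier[OF WC] id_kron_isometry[OF WC WW] .
  have psd\<sigma>: "psd (dA*(dB*dC)) \<sigma>" using \<sigma> by (simp add: density_def mult.assoc)
  then have SC: "\<sigma> \<in> carrier_mat (dA*(dB*dC)) (dA*(dB*dC))" by (rule psd_carrier)
  have "tr ?\<sigma>' = tr (adj ?U * (?U * \<sigma>))"
    by (rule tr_mult_comm[OF mult_carrier_mat[OF UC SC] adj_carrier[OF UC]])
  also have "\<dots> = 1"
    using assoc_mult_mat[OF adj_carrier[OF UC] UC SC] UU SC \<sigma> by (simp add: density_def)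
  finally have "density (dA * dB' * (e*dC)) ?\<sigma>'"
    using psd_conj[OF psd\<sigma> UC] by (simp add: density_def mult.assoc)
  moreover have "ptrace_last (dA * dB') (e*dC) ?\<sigma>' = id_tensor dA dB dB' F \<rho>"
    using ptrace_last_dilation_conj[OF V(1) st SC] ext by simp
  ultimately have "R_eps dA (dB' * (e*dC)) \<epsilon> ?\<sigma>' \<le> R_bar dA dB' \<epsilon> (id_tensor dA dB dB' F \<rho>)"
    unfolding R_bar_def by (blast intro: Sup_upper)
  moreover have "R_eps dA (dB' * (e*dC)) \<epsilon> ?\<sigma>' = R_eps dA (dB * dC) \<epsilon> \<sigma>"
    using R_eps_id_kron_conj[OF WC WW SC] by (simp add: mult.assoc)
  ultimately show ?thesis by simp
qed

theorem proposition1: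
  fixes dA dB dB' :: nat and \<rho> :: "complex mat" and \<epsilon> :: real
    and F :: "complex mat \<Rightarrow> complex mat"
  assumes "density (dA * dB) \<rho>"
    and "0 \<le> \<epsilon>"
    and "cptp dB dB' F"
  shows "R_bar dA dB \<epsilon> \<rho> \<le> R_bar dA dB' \<epsilon> (id_tensor dA dB dB' F \<rho>)"
  unfolding R_bar_def[of dA dB]
  using R_eps_extension_le_R_bar_channel[OF assms(3)] by (blast intro: Sup_least)

end
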